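(* In the setting described in the context, assume there is a map $\beta\colon\Gamma\to\mathrm M_{\mathcal U}$ with $\alpha(g,h)=\varphi_{\mathcal U}(g)\beta(h)\varphi_{\mathcal U}(g)^*-\beta(gh)+\beta(g)$ for all $g,h\in\Gamma$. Then $\beta(1_\Gamma)=0$, $\beta(g)=-\varphi_{\mathcal U}(g)\beta(g^{-1})\varphi_{\mathcal U}(g)^*$, and $c(g,h)=\varphi_{\mathcal U}(g)\beta(h)\varphi_{\mathcal U}(h)-\beta(gh)\varphi_{\mathcal U}(gh)+\beta(g)\varphi_{\mathcal U}(gh)$ for all $g,h\in\Gamma$. Furthermore, such a $\beta$ (satisfying the displayed equation for $\alpha$) can be chosen so that $\beta(g)^*=-\beta(g)$ for all $g\in\Gamma$.
   Context: Fix a non-principal ultrafilter $\mathcal U$ on $\mathbb N$; $x_n=O_{\mathcal U}(y_n)$ means $x_n\le Cy_n$ for all $n$ in a set belonging to $\mathcal U$, for some constant $C$. Let $\Gamma=\langle S\mid R\rangle$ be finitely presented ($S,R$ finite, $\mathbb F_S$ free on $S$). For each $k$ fix a unitarily invariant, submultiplicative norm $\|\cdot\|$ on $\mathrm M_k(\mathbb C)$. For $\varphi\colon S\to\mathrm U(k)$ (extended to $\mathbb F_S$), $\mathrm{def}(\varphi)=\max_{r\in R}\|\varphi(r)-1_k\|$. Let $\varphi_n\colon S\to\mathrm U(k_n)$ with $\lim_{n\to\mathcal U}\mathrm{def}(\varphi_n)=0$. Let $\mathrm M_{\mathcal U}$ be the Banach space of bounded sequences $(T_n)$, $T_n\in\mathrm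 M_{k_n}(\mathbb C)$, modulo those with $\lim_{n\to\mathcal U}\|T_n\|=0$ (with adjoint taken entrywise), and $\mathrm U_{\mathcal U}$ the group $\prod_n\mathrm U(k_n)$ modulo sequences with $\lim_{n\to\mathcal U}\|u_n-1_{k_n}\|=0$, acting on $\mathrm M_{\mathcal U}$ by left and right multiplication. Let $\varphi_{\mathcal U}\colon\Gamma\to\mathrm U_{\mathcal U}$ be the induced homomorphism ($g\mapsto$ class of $(\varphi_n(w))_n$, $w$ any word representing $g$). Fix a section $\sigma\colon\Gamma\to\mathbb F_S$ of the canonical surjection and maps $\tilde\varphi_n\colon\Gamma\to\mathrm U(k_n)$ with $\tilde\varphi_n(1_\Gamma)=1$, $\tilde\varphi_n(g^{-1})=\tilde\varphi_n(g)^*$, $\|\varphi_n(\sigma(g))-\tilde\varphi_n(g)\|=O_{\mathcal U}(\mathrm{def}(\varphi_n))$. Let $c_n(g,h)=(\tilde\varphi_n(g)\tilde\varphi_n(h)-\tilde\varphi_n(gh))/\mathrm{def}(\varphi_n)$ if $\mathrm{def}(\varphi_n)>0$, else $0$; $c(g,h)\in\mathrm M_{\mathcal U}$ is the class of this ($O_{\mathcal U}(1)$-bounded) sequence, and $\alpha(g,h)=c(g,h)\varphi_{\mathcal U}(gh)^*$. *)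

theory Defs
  imports "HOL-Analysis.Analysis" "HOL-Algebra.Group" "Jordan_Normal_Form.Schur_Decomposition"
begin

definition nonprincipal_ultrafilter :: "nat filter \<Rightarrow> bool" where
  "nonprincipal_ultrafilter U \<longleftrightarrow>
     U \<noteq> bot \<and> (\<forall>P. eventually P U \<or> eventually (\<lambda>n. \<not> P n) U)
     \<and> (\<forall>m. \<not> eventually (\<lambda>n. n = m) U)"

text \<open>A word over S is a list of letters (s, e); e = True means the inverse letter.\<close>
type_synonym 's word = "('s \<times> bool) list"

definition words :: "'s set \<Rightarrow> 's word set" where
  "words S = {w. \<forall>x\<in>set w. fst x \<in> S}"

definition pres_step :: "'s set \<Rightarrow> 's word set \<Rightarrow> 's word \<Rightarrow> 's word \<Rightarrow> bool" where
  "pres_step S R u v \<longleftrightarrow>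
     (\<exists>a b s e. s \<in> S \<and> u = a @ [(s,e),(s,\<not>e)] @ b \<and> v = a @ b) \<or>
     (\<exists>a b r. r \<in> R \<and> u = a @ r @ b \<and> v = a @ b)"

definition eval_word :: "('g, 'm) monoid_scheme \<Rightarrow> ('s \<Rightarrow> 'g) \<Rightarrow> 's word \<Rightarrow> 'g" where
  "eval_word G gen w = foldr (\<lambda>(s,e) acc. (if e then inv\<^bsub>G\<^esub> (gen s) else gen s) \<otimes>\<^bsub>G\<^esub> acc) w \<one>\<^bsub>G\<^esub>"

text \<open>G is the group presented by generators S and relators R, via gen (the canonical surjection
  from the free group on S is w \<mapsto> eval_word G gen w).\<close>
definition is_presentation :: "('g, 'm) monoid_scheme \<Rightarrow> 's set \<Rightarrow> 's word set \<Rightarrow> ('s \<Rightarrow> 'g) \<Rightarrow> bool" where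
  "is_presentation G S R gen \<longleftrightarrow>
     group G \<and> gen \<in> S \<rightarrow> carrier G \<and> R \<subseteq> words S \<and>
     (\<forall>g\<in>carrier G. \<exists>w\<in>words S. eval_word G gen w = g) \<and>
     (\<forall>w\<in>words S. \<forall>w'\<in>words S.
        eval_word G gen w = eval_word G gen w' \<longleftrightarrow> equivclp (pres_step S R) w w')"

definition unitary_mat :: "nat \<Rightarrow> complex mat \<Rightarrow> bool" where
  "unitary_mat k U \<longleftrightarrow> U \<in> carrier_mat k k \<and> U * mat_adjoint U = 1\<^sub>m k \<and> mat_adjoint U * U = 1\<^sub>m k"

definition ui_submult_norm :: "(complex mat \<Rightarrow> real) \<Rightarrow> bool" where
  "ui_submult_norm nrm \<longleftrightarrow>
    (\<forall>k. \<forall>A\<in>carrier_mat k k. \<forall>B\<in>carrier_mat k k.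
        (nrm A = 0 \<longleftrightarrow> A = 0\<^sub>m k k) \<and>
        nrm (A + B) \<le> nrm A + nrm B \<and>
        (\<forall>a. nrm (a \<cdot>\<^sub>m A) = cmod a * nrm A) \<and>
        nrm (A * B) \<le> nrm A * nrm B \<and>
        (\<forall>P Q. unitary_mat k P \<longrightarrow> unitary_mat k Q \<longrightarrow> nrm (P * A * Q) = nrm A))"

definition mat_word :: "nat \<Rightarrow> ('s \<Rightarrow> complex mat) \<Rightarrow> 's word \<Rightarrow> complex mat" where
  "mat_word k f w = foldr (\<lambda>(s,e) acc. (if e then mat_adjoint (f s) else f s) * acc) w (1\<^sub>m k)"

text \<open>Defect: maximum over relators (0 if R is empty; norms are nonnegative).\<close>
definition defect :: "(complex mat \<Rightarrow> real) \<Rightarrow> 's word set \<Rightarrow> nat \<Rightarrow> ('s \<Rightarrow> complex mat) \<Rightarrow> real" where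
  "defect nrm R k f = Max (insert 0 ((\<lambda>r. nrm (mat_word k f r - 1\<^sub>m k)) ` R))"

text \<open>Elements of M_U are represented by bounded sequences T_n \<in> M_{k_n}(C).\<close>
definition MU_seq :: "(complex mat \<Rightarrow> real) \<Rightarrow> (nat \<Rightarrow> nat) \<Rightarrow> (nat \<Rightarrow> complex mat) \<Rightarrow> bool" where
  "MU_seq nrm k T \<longleftrightarrow> (\<forall>n. T n \<in> carrier_mat (k n) (k n)) \<and> (\<exists>C. \<forall>n. nrm (T n) \<le> C)"

text \<open>Equality of the classes in M_U.\<close>
definition eqU :: "nat filter \<Rightarrow> (complex mat \<Rightarrow> real) \<Rightarrow> (nat \<Rightarrow> complex mat) \<Rightarrow> (nat \<Rightarrow> complex mat) \<Rightarrow> bool" where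
  "eqU U nrm A B \<longleftrightarrow> ((\<lambda>n. nrm (A n - B n)) \<longlongrightarrow> 0) U"

text \<open>Representative of \<phi>_U(g): the sequence \<phi>_n(\<sigma>(g)).\<close>
definition phiU :: "(nat \<Rightarrow> nat) \<Rightarrow> (nat \<Rightarrow> 's \<Rightarrow> complex mat) \<Rightarrow> ('g \<Rightarrow> 's word) \<Rightarrow> 'g \<Rightarrow> nat \<Rightarrow> complex mat" where
  "phiU k \<phi> \<sigma> g n = mat_word (k n) (\<phi> n) (\<sigma> g)"

definition c_seq :: "('g, 'm) monoid_scheme \<Rightarrow> (complex mat \<Rightarrow> real) \<Rightarrow> 's word set \<Rightarrow> (nat \<Rightarrow> nat)
    \<Rightarrow> (nat \<Rightarrow> 's \<Rightarrow> complex mat) \<Rightarrow> (nat \<Rightarrow> 'g \<Rightarrow> complex mat) \<Rightarrow> 'g \<Rightarrow> 'g \<Rightarrow> nat \<Rightarrow> complex mat" where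
  "c_seq G nrm R k \<phi> \<phi>t g h n =
     (if defect nrm R (k n) (\<phi> n) > 0
      then (1 / complex_of_real (defect nrm R (k n) (\<phi> n))) \<cdot>\<^sub>m
             (\<phi>t n g * \<phi>t n h - \<phi>t n (g \<otimes>\<^bsub>G\<^esub> h))
      else 0\<^sub>m (k n) (k n))"

definition alpha_seq :: "('g, 'm) monoid_scheme \<Rightarrow> (complex mat \<Rightarrow> real) \<Rightarrow> 's word set \<Rightarrow> (nat \<Rightarrow> nat)
    \<Rightarrow> (nat \<Rightarrow> 's \<Rightarrow> complex mat) \<Rightarrow> ('g \<Rightarrow> 's word) \<Rightarrow> (nat \<Rightarrow> 'g \<Rightarrow> complex mat) \<Rightarrow> 'g \<Rightarrow> 'g \<Rightarrow> nat \<Rightarrow> complex mat" where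
  "alpha_seq G nrm R k \<phi> \<sigma> \<phi>t g h n =
     c_seq G nrm R k \<phi> \<phi>t g h n * mat_adjoint (phiU k \<phi> \<sigma> (g \<otimes>\<^bsub>G\<^esub> h) n)"

definition alpha_coboundary :: "nat filter \<Rightarrow> ('g, 'm) monoid_scheme \<Rightarrow> (complex mat \<Rightarrow> real) \<Rightarrow> 's word set
    \<Rightarrow> (nat \<Rightarrow> nat) \<Rightarrow> (nat \<Rightarrow> 's \<Rightarrow> complex mat) \<Rightarrow> ('g \<Rightarrow> 's word) \<Rightarrow> (nat \<Rightarrow> 'g \<Rightarrow> complex mat)
    \<Rightarrow> ('g \<Rightarrow> nat \<Rightarrow> complex mat) \<Rightarrow> bool" where
  "alpha_coboundary U G nrm R k \<phi> \<sigma> \<phi>t \<beta> \<longleftrightarrow>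
     (\<forall>g\<in>carrier G. MU_seq nrm k (\<beta> g)) \<and>
     (\<forall>g\<in>carrier G. \<forall>h\<in>carrier G.
        eqU U nrm (alpha_seq G nrm R k \<phi> \<sigma> \<phi>t g h)
          (\<lambda>n. phiU k \<phi> \<sigma> g n * \<beta> h n * mat_adjoint (phiU k \<phi> \<sigma> g n)
               - \<beta> (g \<otimes>\<^bsub>G\<^esub> h) n + \<beta> g n))"

end

theory Submission
  imports Defs "HOL-Computational_Algebra.Fundamental_Theorem_Algebra"
begin

(*
  The identities for beta(1) and beta(g) come from evaluating the defining identity of beta at
  (1,1) and (g, g^-1), where phi~ is exactly multiplicative and alpha vanishes. Multiplying the
  identity from the right by phi_U(gh) gives the formula for c, because phi_U is multiplicative
  modulo U: where the defect is positive, phi_n(sigma(gh)) and phi_n(sigma g) phi_n(sigma h) are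
  both within O(defect) of phi~ (c being bounded), and where it vanishes the presentation makes
  them equal. Finally alpha + adj alpha is of second order in the defect, so alpha is skew-adjoint
  modulo U and the skew-adjoint part (beta - adj beta)/2 satisfies the same identity; it stays
  bounded because every matrix is unitarily equivalent to its adjoint.
*)

lemma mult_carrier_mat_square [simp]:
  "A \<in> carrier_mat n n \<Longrightarrow> B \<in> carrier_mat n n \<Longrightarrow> A * B \<in> carrier_mat n n"
  by (rule mult_carrier_mat)

declare minus_carrier_mat [simp] uminus_carrier_mat [simp]

lemma minus_add_minus_cancel_mat:
  "(X :: 'a :: ab_group_add mat) \<in> carrier_mat m n \<Longrightarrow> Y \<in> carrier_mat m n \<Longrightarrow> Z \<in> carrier_mat m n \<Longrightarrow>
   (X - Y) + (Y - Z) = X - Z"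
  by (intro eq_matI) auto

lemma eq_of_minus_eq_zero_mat:
  assumes "(A :: 'a :: ab_group_add mat) \<in> carrier_mat m n" "B \<in> carrier_mat m n" "A - B = 0\<^sub>m m n"
  shows "A = B"
proof (rule eq_matI)
  fix i j assume "i < dim_row B" "j < dim_col B"
  then show "A $$ (i,j) = B $$ (i,j)"
    using arg_cong[OF assms(3), of "\<lambda>X. X $$ (i,j)"] assms(1,2) by simp
qed (use assms in auto)

lemma mat_adjoint_altdef:
  "mat_adjoint (A :: complex mat) = mat (dim_col A) (dim_row A) (\<lambda>(i,j). cnj (A $$ (j,i)))"
  unfolding mat_adjoint_def by (rule eq_matI) (auto simp: mat_of_rows_def)

lemma mat_adjoint_dim [simp]:
  "dim_row (mat_adjoint (A :: complex mat)) = dim_col A" "dim_col (mat_adjoint A) = dim_row A"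
  by (auto simp: mat_adjoint_altdef)

lemma index_mat_adjoint [simp]:
  "i < dim_col A \<Longrightarrow> j < dim_row A \<Longrightarrow> mat_adjoint (A :: complex mat) $$ (i,j) = cnj (A $$ (j,i))"
  by (auto simp: mat_adjoint_altdef)

lemma mat_adjoint_carrier [simp]: "(A :: complex mat) \<in> carrier_mat m n \<Longrightarrow> mat_adjoint A \<in> carrier_mat n m"
  by auto

lemma mat_adjoint_adjoint [simp]: "mat_adjoint (mat_adjoint (A :: complex mat)) = A"
  by (rule eq_matI) auto

lemma mat_adjoint_one [simp]: "mat_adjoint (1\<^sub>m n :: complex mat) = 1\<^sub>m n"
  by (rule eq_matI) auto

lemma mat_adjoint_zero [simp]: "mat_adjoint (0\<^sub>m n m :: complex mat) = 0\<^sub>m m n"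
  by (rule eq_matI) auto

lemma mat_adjoint_mult:
  "(A :: complex mat) \<in> carrier_mat m n \<Longrightarrow> B \<in> carrier_mat n p \<Longrightarrow>
   mat_adjoint (A * B) = mat_adjoint B * mat_adjoint A"
  by (rule eq_matI) (auto simp: scalar_prod_def mult.commute)

lemma mat_adjoint_add:
  "(A :: complex mat) \<in> carrier_mat m n \<Longrightarrow> B \<in> carrier_mat m n \<Longrightarrow>
   mat_adjoint (A + B) = mat_adjoint A + mat_adjoint B"
  by (rule eq_matI) auto

lemma mat_adjoint_minus:
  "(A :: complex mat) \<in> carrier_mat m n \<Longrightarrow> B \<in> carrier_mat m n \<Longrightarrow>
   mat_adjoint (A - B) = mat_adjoint A - mat_adjoint B"
  by (rule eq_matI) auto

lemma mat_adjoint_smult: "mat_adjoint (a \<cdot>\<^sub>m (A :: complex mat)) = cnj a \<cdot>\<^sub>m mat_adjoint A"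
  by (rule eq_matI) auto

lemma det_mat_adjoint:
  assumes "(A :: complex mat) \<in> carrier_mat n n"
  shows "det (mat_adjoint A) = cnj (det A)"
proof -
  have "mat_adjoint A = transpose_mat (map_mat cnj A)"
    by (rule eq_matI) auto
  then have "det (mat_adjoint A) = det (map_mat cnj A)"
    using det_transpose[of "map_mat cnj A" n] assms by simp
  also have "\<dots> = cnj (det A)"
    using assms by (auto simp: det_def' cnj_sum cnj_prod intro!: sum.cong prod.cong)
  finally show ?thesis .
qed

lemma mat_adjoint_four_block_diag:
  assumes "(A :: complex mat) \<in> carrier_mat a a" "D \<in> carrier_mat b b"
  shows "mat_adjoint (four_block_mat A (0\<^sub>m a b) (0\<^sub>m b a) D) =
    four_block_mat (mat_adjoint A) (0\<^sub>m a b) (0\<^sub>m b a) (mat_adjoint D)"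
  using assms by (intro eq_matI) auto

lemma mult_adjoint_add_split:
  assumes T: "(T :: complex mat) \<in> carrier_mat k k" and M: "M \<in> carrier_mat k k" and P: "P \<in> carrier_mat k k"
  shows "M * mat_adjoint P + P * mat_adjoint M
    = (M * mat_adjoint T + mat_adjoint (M * mat_adjoint T)) + (M * mat_adjoint (P - T) + (P - T) * mat_adjoint M)"
proof -
  define E where "E = P - T"
  have [simp]: "E \<in> carrier_mat k k"
    unfolding E_def using P T by simp
  have P_split: "P = T + E" "mat_adjoint P = mat_adjoint T + mat_adjoint E"
    unfolding E_def using T P by (auto simp: mat_adjoint_minus carrier_matD[of T k k] intro!: eq_matI)
  have "M * mat_adjoint P = M * mat_adjoint T + M * mat_adjoint E"
    unfolding P_split(2) by (rule mult_add_distrib_mat[of _ k k _ k]) (use T M in auto)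
  moreover have "P * mat_adjoint M = mat_adjoint (M * mat_adjoint T) + E * mat_adjoint M"
    unfolding P_split(1) using T M
    by (simp add: add_mult_distrib_mat[of _ k k _ _ k] mat_adjoint_mult[of _ k k _ k])
  ultimately show ?thesis
    unfolding E_def[symmetric] using T M P
    by (intro eq_matI) (auto simp: carrier_matD[of T k k] carrier_matD[of M k k] carrier_matD[of E k k])
qed

definition skew_part :: "complex mat \<Rightarrow> complex mat" where
  "skew_part A = (1/2 :: complex) \<cdot>\<^sub>m (A - mat_adjoint A)"

lemma skew_part_carrier [simp]: "A \<in> carrier_mat n n \<Longrightarrow> skew_part A \<in> carrier_mat n n"
  unfolding skew_part_def by simp

lemma mat_adjoint_skew_part: "A \<in> carrier_mat n n \<Longrightarrow> mat_adjoint (skew_part A) = - skew_part A"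
  unfolding skew_part_def mat_adjoint_smult by (intro eq_matI) (auto simp: mat_adjoint_minus field_simps)

lemma skew_part_add_diff:
  assumes "A \<in> carrier_mat n n" "B \<in> carrier_mat n n" "C \<in> carrier_mat n n"
  shows "skew_part (A - B + C) = skew_part A - skew_part B + skew_part C"
  using assms unfolding skew_part_def by (intro eq_matI) (auto simp: mat_adjoint_minus mat_adjoint_add algebra_simps)

lemma skew_part_conj:
  assumes P: "P \<in> carrier_mat n n" and A: "A \<in> carrier_mat n n"
  shows "skew_part (P * A * mat_adjoint P) = P * skew_part A * mat_adjoint P"
proof -
  have "mat_adjoint (P * A * mat_adjoint P) = P * mat_adjoint A * mat_adjoint P"
    using P A by (simp add: mat_adjoint_mult[of _ n n _ n] assoc_mult_mat[of _ n n _ n _ n])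
  then show ?thesis
    using P A unfolding skew_part_def
    by (simp add: mult_smult_distrib[of _ n n _ n] mult_smult_assoc_mat[of _ n n _ n]
        mult_minus_distrib_mat[of _ n n _ n] minus_mult_distrib_mat[of _ n n _ _ n])
qed

lemma smult_zero_vec [simp]: "a \<cdot>\<^sub>v 0\<^sub>v n = (0\<^sub>v n :: 'a :: mult_zero vec)"
  by (intro eq_vecI) auto

lemma zero_smult_vec: "x \<in> carrier_vec n \<Longrightarrow> (0 :: 'a :: mult_zero) \<cdot>\<^sub>v x = 0\<^sub>v n"
  by (intro eq_vecI) auto

lemma cscalar_prod_smult_left:
  "(x :: complex vec) \<in> carrier_vec n \<Longrightarrow> y \<in> carrier_vec n \<Longrightarrow> (a \<cdot>\<^sub>v x) \<bullet>c y = a * (x \<bullet>c y)"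
  unfolding scalar_prod_def by (auto simp: sum_distrib_left intro!: sum.cong)

lemma cscalar_prod_smult_right:
  "(x :: complex vec) \<in> carrier_vec n \<Longrightarrow> y \<in> carrier_vec n \<Longrightarrow> x \<bullet>c (b \<cdot>\<^sub>v y) = cnj b * (x \<bullet>c y)"
  unfolding scalar_prod_def by (auto simp: sum_distrib_left intro!: sum.cong)

lemma cscalar_prod_real_smult_self:
  "(x :: complex vec) \<in> carrier_vec n \<Longrightarrow>
   (complex_of_real t \<cdot>\<^sub>v x) \<bullet>c (complex_of_real t \<cdot>\<^sub>v x) = complex_of_real (t * t) * (x \<bullet>c x)"
  by (simp add: cscalar_prod_smult_left cscalar_prod_smult_right)

lemma cscalar_prod_self_real:
  assumes "(w :: complex vec) \<in> carrier_vec n" "w \<noteq> 0\<^sub>v n"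
  shows "w \<bullet>c w = complex_of_real (Re (w \<bullet>c w))" "Re (w \<bullet>c w) > 0"
proof -
  have "w \<bullet>c w > 0"
    using assms conjugate_square_greater_0_vec by blast
  then show "w \<bullet>c w = complex_of_real (Re (w \<bullet>c w))" "Re (w \<bullet>c w) > 0"
    by (auto simp: less_complex_def complex_eq_iff)
qed

lemma cscalar_prod_normalize_self:
  assumes "(w :: complex vec) \<in> carrier_vec n" "w \<noteq> 0\<^sub>v n"
  defines "t \<equiv> 1 / sqrt (Re (w \<bullet>c w))"
  shows "(complex_of_real t \<cdot>\<^sub>v w) \<bullet>c (complex_of_real t \<cdot>\<^sub>v w) = 1"
proof -
  define N where "N = Re (w \<bullet>c w)"
  have N: "N > 0" "w \<bullet>c w = complex_of_real N"
    using cscalar_prod_self_real[OF assms(1,2)] unfolding N_def by auto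
  have "(complex_of_real t \<cdot>\<^sub>v w) \<bullet>c (complex_of_real t \<cdot>\<^sub>v w) = complex_of_real (t * t * N)"
    unfolding cscalar_prod_real_smult_self[OF assms(1)] N(2) by simp
  also have "t * t * N = 1"
    using N(1) unfolding t_def N_def[symmetric] by (auto simp: field_simps)
  finally show ?thesis
    by simp
qed

lemma cscalar_prod_mult_mat_vec:
  assumes A: "(A :: complex mat) \<in> carrier_mat m n" and x: "x \<in> carrier_vec n" and y: "y \<in> carrier_vec m"
  shows "(A *\<^sub>v x) \<bullet>c y = x \<bullet>c (mat_adjoint A *\<^sub>v y)"
proof -
  have "(A *\<^sub>v x) \<bullet>c y = (\<Sum>i<m. \<Sum>j<n. A $$ (i,j) * x $ j * cnj (y $ i))"
    using A x y by (auto simp: scalar_prod_def atLeast0LessThan sum_distrib_right intro!: sum.cong)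
  also have "\<dots> = (\<Sum>j<n. \<Sum>i<m. A $$ (i,j) * x $ j * cnj (y $ i))"
    by (rule sum.swap)
  also have "\<dots> = x \<bullet>c (mat_adjoint A *\<^sub>v y)"
    using A x y by (auto simp: scalar_prod_def atLeast0LessThan sum_distrib_left cnj_sum intro!: sum.cong)
  finally show ?thesis .
qed

section \<open>Unitary matrices\<close>

lemma unitary_mat_carrier: "unitary_mat n P \<Longrightarrow> P \<in> carrier_mat n n"
  unfolding unitary_mat_def by auto

lemma unitary_mat_one: "unitary_mat n (1\<^sub>m n)"
  unfolding unitary_mat_def by auto

lemma unitary_mat_adjoint: "unitary_mat n P \<Longrightarrow> unitary_mat n (mat_adjoint P)"
  unfolding unitary_mat_def by auto

lemma unitary_matI:
  assumes "(P :: complex mat) \<in> carrier_mat n n" "mat_adjoint P * P = 1\<^sub>m n"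
  shows "unitary_mat n P"
  using assms mat_mult_left_right_inverse[of "mat_adjoint P" n P] unfolding unitary_mat_def by auto

lemma unitary_mat_cancel:
  assumes "unitary_mat n P" "B \<in> carrier_mat n m"
  shows "P * (mat_adjoint P * B) = B" "mat_adjoint P * (P * B) = B"
    "P * mat_adjoint P = 1\<^sub>m n" "mat_adjoint P * P = 1\<^sub>m n"
proof -
  have P: "P \<in> carrier_mat n n" "P * mat_adjoint P = 1\<^sub>m n" "mat_adjoint P * P = 1\<^sub>m n"
    using assms(1) unfolding unitary_mat_def by auto
  then show "P * mat_adjoint P = 1\<^sub>m n" "mat_adjoint P * P = 1\<^sub>m n"
    by auto
  show "P * (mat_adjoint P * B) = B" "mat_adjoint P * (P * B) = B"
    using P assms(2) by (simp_all flip: assoc_mult_mat[of _ n n _ n _ m])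
qed

lemma unitary_mat_mult:
  assumes P: "unitary_mat n P" and Q: "unitary_mat n Q"
  shows "unitary_mat n (P * Q)"
proof (rule unitary_matI)
  have [simp]: "P \<in> carrier_mat n n" "Q \<in> carrier_mat n n"
    using P Q unitary_mat_carrier by auto
  then show PQ: "P * Q \<in> carrier_mat n n"
    by simp
  have "mat_adjoint (P * Q) * (P * Q) = mat_adjoint Q * mat_adjoint P * (P * Q)"
    using mat_adjoint_mult[of P n n Q n] by simp
  also have "\<dots> = mat_adjoint Q * (mat_adjoint P * (P * Q))"
    using PQ by (simp add: assoc_mult_mat[of _ n n _ n _ n])
  finally show "mat_adjoint (P * Q) * (P * Q) = 1\<^sub>m n"
    using unitary_mat_cancel(2)[OF P, of Q n] unitary_mat_cancel(4)[OF Q, of Q n] by simp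
qed

lemma unitary_mat_four_block:
  assumes "unitary_mat m P"
  shows "unitary_mat (Suc m) (four_block_mat (1\<^sub>m 1) (0\<^sub>m 1 m) (0\<^sub>m m 1) P)"
proof (rule unitary_matI)
  have P: "P \<in> carrier_mat m m" "mat_adjoint P * P = 1\<^sub>m m"
    using assms unfolding unitary_mat_def by auto
  show "four_block_mat (1\<^sub>m 1) (0\<^sub>m 1 m) (0\<^sub>m m 1) P \<in> carrier_mat (Suc m) (Suc m)"
    using four_block_carrier_mat[of "1\<^sub>m 1" 1 1 P m m] P by simp
  show "mat_adjoint (four_block_mat (1\<^sub>m 1) (0\<^sub>m 1 m) (0\<^sub>m m 1) P) *
      four_block_mat (1\<^sub>m 1) (0\<^sub>m 1 m) (0\<^sub>m m 1) P = 1\<^sub>m (Suc m)"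
    using P by (simp add: mat_adjoint_four_block_diag, subst mult_four_block_mat) auto
qed

lemma unitary_minus_one_add_adjoint:
  assumes Y: "unitary_mat k Y"
  shows "(Y - 1\<^sub>m k) + mat_adjoint (Y - 1\<^sub>m k) = - (mat_adjoint (Y - 1\<^sub>m k) * (Y - 1\<^sub>m k))"
proof -
  have Yc: "Y \<in> carrier_mat k k" and Y': "mat_adjoint Y \<in> carrier_mat k k"
    using Y unitary_mat_carrier by auto
  have "mat_adjoint (Y - 1\<^sub>m k) * (Y - 1\<^sub>m k) = mat_adjoint Y * Y - mat_adjoint Y - Y + 1\<^sub>m k"
    using Yc Y' by (simp add: mat_adjoint_minus[OF Yc] mult_minus_distrib_mat[of _ k k]
        minus_mult_distrib_mat[of _ k k] , intro eq_matI) auto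
  then show ?thesis
    using unitary_mat_cancel(4)[OF Y Yc] Yc Y' by (intro eq_matI) (auto simp: mat_adjoint_minus[OF Yc])
qed

lemma conj_mult_diff_split:
  assumes A: "unitary_mat n A"
    and [simp]: "B \<in> carrier_mat n n" "H \<in> carrier_mat n n" "D \<in> carrier_mat n n" "E \<in> carrier_mat n n"
      "X \<in> carrier_mat n n" "P \<in> carrier_mat n n"
  shows "X * P - (A * B * H - D * P + E * P)
    = (X - (A * B * mat_adjoint A - D + E)) * P + (A * B * mat_adjoint A) * (P - A * H)"
proof -
  have [simp]: "A \<in> carrier_mat n n"
    using A unitary_mat_carrier by blast
  define C where "C = A * B * mat_adjoint A"
  have [simp]: "C \<in> carrier_mat n n"
    unfolding C_def by simp
  have "(X - (C - D + E)) * P = X * P - (C * P - D * P + E * P)"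
    by (simp add: minus_mult_distrib_mat[of _ n n _ _ n] add_mult_distrib_mat[of _ n n _ _ n])
  moreover have "C * (P - A * H) = C * P - A * B * H"
    unfolding C_def using unitary_mat_cancel(2)[OF A, of H n]
    by (simp add: mult_minus_distrib_mat[of _ n n _ n] assoc_mult_mat[of _ n n _ n _ n])
  moreover have "Y - (F - DP + EP) = (Y - (CP - DP + EP)) + (CP - F)"
    if "Y \<in> carrier_mat n n" "F \<in> carrier_mat n n" "DP \<in> carrier_mat n n" "EP \<in> carrier_mat n n"
      "CP \<in> carrier_mat n n" for Y F DP EP CP :: "complex mat"
    using that by (intro eq_matI) auto
  ultimately show ?thesis
    unfolding C_def[symmetric] by simp
qed

lemma unitary_mat_of_cols:
  assumes len: "length vs = n" and vs: "set vs \<subseteq> carrier_vec n"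
    and orth: "\<And>i j. i < n \<Longrightarrow> j < n \<Longrightarrow> vs ! i \<bullet>c vs ! j = (if i = j then 1 else 0)"
  shows "unitary_mat n (mat_of_cols n vs)"
proof (rule unitary_matI)
  let ?V = "mat_of_cols n vs"
  show V: "?V \<in> carrier_mat n n"
    using mat_of_cols_carrier(1)[of n vs] len by simp
  have cols: "i < n \<Longrightarrow> col ?V i = vs ! i" for i
    using len vs nth_mem[of i vs] by (intro col_mat_of_cols) auto
  show "mat_adjoint ?V * ?V = 1\<^sub>m n"
  proof (rule eq_matI)
    fix i j assume "i < dim_row (1\<^sub>m n)" "j < dim_col (1\<^sub>m n)"
    then have ij: "i < n" "j < n"
      by auto
    have "(mat_adjoint ?V * ?V) $$ (i,j) = col ?V j \<bullet>c col ?V i"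
      using ij V by (auto simp: scalar_prod_def mult.commute intro!: sum.cong)
    then show "(mat_adjoint ?V * ?V) $$ (i,j) = 1\<^sub>m n $$ (i,j)"
      using orth[OF ij(2,1)] ij by (auto simp: cols)
  qed (use V in auto)
qed

lemma unit_vec_extends_to_unitary:
  assumes v: "(v :: complex vec) \<in> carrier_vec n" and v1: "v \<bullet>c v = 1"
  shows "\<exists>V. unitary_mat n V \<and> col V 0 = v"
proof -
  have v0: "v \<noteq> 0\<^sub>v n"
    using v1 v by auto
  interpret cof_vec_space n "TYPE(complex)" .
  define b where "b = basis_completion v"
  define ws where "ws = gram_schmidt n b"
  from basis_completion[OF v v0, folded b_def]
  have dist_b: "distinct b" and indep: "\<not> lin_dep (set b)" and b: "set b \<subseteq> carrier_vec n"
    and hdb: "hd b = v" and len_b: "length b = n"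
    by auto
  have n: "n > 0"
    using v0 v by (cases n) auto
  from hdb len_b n obtain vs where bv: "b = v # vs"
    by (cases b) auto
  from gram_schmidt_result[OF b dist_b indep refl, folded ws_def]
  have ws: "set ws \<subseteq> carrier_vec n" "corthogonal ws" "length ws = n"
    by (auto simp: len_b)
  have ws_0: "ws ! 0 = v"
    using gram_schmidt_hd[OF v, of vs, folded bv ws_def] n ws(3) by (cases ws) auto
  have ws_carrier: "i < n \<Longrightarrow> ws ! i \<in> carrier_vec n" for i
    using ws nth_mem by auto
  have ws_nonzero: "i < n \<Longrightarrow> ws ! i \<noteq> 0\<^sub>v n" for i
    using corthogonalD[OF ws(2), of i i] ws(3) by auto
  define unitize where "unitize = (\<lambda>w :: complex vec. complex_of_real (1 / sqrt (Re (w \<bullet>c w))) \<cdot>\<^sub>v w)"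
  have "unitize (ws ! i) \<bullet>c unitize (ws ! j) = (if i = j then 1 else 0)" if ij: "i < n" "j < n" for i j
  proof (cases "i = j")
    case True
    have "unitize (ws ! j) \<bullet>c unitize (ws ! j) = 1"
      unfolding unitize_def by (rule cscalar_prod_normalize_self[OF ws_carrier ws_nonzero]) (use ij in auto)
    with True show ?thesis
      by simp
  next
    case False
    then have "ws ! i \<bullet>c ws ! j = 0"
      using corthogonalD[OF ws(2), of i j] ij ws(3) by auto
    with False show ?thesis
      unfolding unitize_def
      using cscalar_prod_smult_left[OF _ smult_carrier_vec[THEN iffD2, OF ws_carrier[OF ij(2)]]]
        cscalar_prod_smult_right[OF ws_carrier[OF ij(1)] ws_carrier[OF ij(2)]] ws_carrier[OF ij(1)]
      by simp
  qed
  then have "unitary_mat n (mat_of_cols n (map unitize ws))"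
    using ws by (intro unitary_mat_of_cols) (auto simp: unitize_def)
  moreover have "col (mat_of_cols n (map unitize ws)) 0 = v"
    using n ws ws_0 v v1 by (simp add: unitize_def)
  ultimately show ?thesis
    by blast
qed

lemma exists_unit_eigenvector:
  assumes B: "(B :: complex mat) \<in> carrier_mat n n" and n: "n > 0"
  shows "\<exists>v e. v \<in> carrier_vec n \<and> v \<bullet>c v = 1 \<and> B *\<^sub>v v = e \<cdot>\<^sub>v v"
proof -
  have "\<not> constant (poly (char_poly B))"
    using degree_monic_char_poly[OF B] n by (simp add: constant_degree)
  then obtain e where "poly (char_poly B) e = 0"
    using fundamental_theorem_of_algebra by blast
  then have "eigenvalue B e"
    using eigenvalue_root_char_poly[OF B] by simp
  then obtain w where w: "w \<in> carrier_vec n" "w \<noteq> 0\<^sub>v n" "B *\<^sub>v w = e \<cdot>\<^sub>v w"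
    using B unfolding eigenvalue_def eigenvector_def by auto
  define t where "t = complex_of_real (1 / sqrt (Re (w \<bullet>c w)))"
  have "(t \<cdot>\<^sub>v w) \<bullet>c (t \<cdot>\<^sub>v w) = 1"
    unfolding t_def by (rule cscalar_prod_normalize_self[OF w(1,2)])
  moreover have "B *\<^sub>v (t \<cdot>\<^sub>v w) = e \<cdot>\<^sub>v (t \<cdot>\<^sub>v w)"
    using mult_mat_vec[OF B w(1)] w(3) by (simp add: smult_smult_assoc mult.commute)
  moreover have "t \<cdot>\<^sub>v w \<in> carrier_vec n"
    using w(1) by simp
  ultimately show ?thesis
    by blast
qed

lemma singular_adjoint_kernel:
  assumes A: "(A :: complex mat) \<in> carrier_mat n n" and w: "w \<in> carrier_vec n" "w \<noteq> 0\<^sub>v n"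
    and Aw: "A *\<^sub>v w = 0\<^sub>v n"
  shows "\<exists>u. u \<in> carrier_vec n \<and> u \<noteq> 0\<^sub>v n \<and> mat_adjoint A *\<^sub>v u = 0\<^sub>v n"
proof -
  have char_0: "char_matrix B 0 = B" if "B \<in> carrier_mat n n" for B :: "complex mat"
    using that unfolding char_matrix_def by (intro eq_matI) auto
  have "eigenvector A w 0"
    using A w Aw unfolding eigenvector_def by auto
  then have "det A = 0"
    using eigenvalue_det[OF A, of 0] char_0[OF A] by (auto simp: eigenvalue_def)
  then have "det (char_matrix (mat_adjoint A) 0) = 0"
    using det_mat_adjoint[OF A] char_0[of "mat_adjoint A"] A by simp
  then obtain u where u: "u \<in> carrier_vec n" "u \<noteq> 0\<^sub>v n" "mat_adjoint A *\<^sub>v u = 0 \<cdot>\<^sub>v u"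
    using eigenvalue_det[of "mat_adjoint A" n] A unfolding eigenvalue_def eigenvector_def by auto
  then show ?thesis
    using zero_smult_vec by metis
qed

text \<open>The eigenvalue of the adjoint of A times A at the unit vector v is the squared length of Av,
  so u = Av/|Av| completes the singular pair.\<close>

lemma singular_pair_of_eigenvector:
  assumes A: "(A :: complex mat) \<in> carrier_mat n n" and v: "v \<in> carrier_vec n" "v \<bullet>c v = 1"
    and eig: "mat_adjoint A *\<^sub>v (A *\<^sub>v v) = e \<cdot>\<^sub>v v" and Av0: "A *\<^sub>v v \<noteq> 0\<^sub>v n"
  shows "\<exists>u s. u \<in> carrier_vec n \<and> u \<bullet>c u = 1 \<and>
    A *\<^sub>v v = complex_of_real s \<cdot>\<^sub>v u \<and> mat_adjoint A *\<^sub>v u = complex_of_real s \<cdot>\<^sub>v v"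
proof -
  have Av: "A *\<^sub>v v \<in> carrier_vec n"
    using A v by simp
  define s where "s = sqrt (Re ((A *\<^sub>v v) \<bullet>c (A *\<^sub>v v)))"
  define u where "u = complex_of_real (1 / s) \<cdot>\<^sub>v (A *\<^sub>v v)"
  have u: "u \<in> carrier_vec n" "u \<bullet>c u = 1"
    using Av cscalar_prod_normalize_self[OF Av Av0] unfolding u_def s_def by auto
  have s: "s > 0" "(A *\<^sub>v v) \<bullet>c (A *\<^sub>v v) = complex_of_real (s * s)"
    using cscalar_prod_self_real[OF Av Av0] unfolding s_def by auto
  have "A *\<^sub>v v = complex_of_real s \<cdot>\<^sub>v u"
    unfolding u_def smult_smult_assoc using s(1) by (simp flip: of_real_mult)
  moreover have "mat_adjoint A *\<^sub>v u = complex_of_real s \<cdot>\<^sub>v v"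
  proof -
    have "cnj e = (A *\<^sub>v v) \<bullet>c (A *\<^sub>v v)"
      using cscalar_prod_mult_mat_vec[OF A v(1) Av] eig cscalar_prod_smult_right[OF v(1) v(1), of e] v(2)
      by simp
    then have e: "e = complex_of_real (s * s)"
      unfolding s(2) by (metis complex_cnj_cnj complex_cnj_complex_of_real)
    have "mat_adjoint A *\<^sub>v u = complex_of_real (1 / s) \<cdot>\<^sub>v (e \<cdot>\<^sub>v v)"
      unfolding u_def using mult_mat_vec[of "mat_adjoint A" n n] A Av eig by simp
    also have "\<dots> = complex_of_real (1 / s * (s * s)) \<cdot>\<^sub>v v"
      unfolding e smult_smult_assoc by (simp only: of_real_mult)
    also have "1 / s * (s * s) = s"
      using s(1) by simp
    finally show ?thesis .
  qed
  ultimately show ?thesis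
    using u by blast
qed

lemma exists_singular_pair:
  assumes A: "(A :: complex mat) \<in> carrier_mat n n" and n: "n > 0"
  shows "\<exists>u v s. u \<in> carrier_vec n \<and> v \<in> carrier_vec n \<and> u \<bullet>c u = 1 \<and> v \<bullet>c v = 1 \<and>
     A *\<^sub>v v = complex_of_real s \<cdot>\<^sub>v u \<and> mat_adjoint A *\<^sub>v u = complex_of_real s \<cdot>\<^sub>v v"
proof -
  have A': "mat_adjoint A \<in> carrier_mat n n"
    using A by simp
  obtain v e where v: "v \<in> carrier_vec n" "v \<bullet>c v = 1" and "(mat_adjoint A * A) *\<^sub>v v = e \<cdot>\<^sub>v v"
    using exists_unit_eigenvector[OF mult_carrier_mat[OF A' A] n] by blast
  then have eig: "mat_adjoint A *\<^sub>v (A *\<^sub>v v) = e \<cdot>\<^sub>v v"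
    using assoc_mult_mat_vec[OF A' A v(1)] by simp
  show ?thesis
  proof (cases "A *\<^sub>v v = 0\<^sub>v n")
    case True
    have "v \<noteq> 0\<^sub>v n"
      using v by auto
    then obtain u' where u': "u' \<in> carrier_vec n" "u' \<noteq> 0\<^sub>v n" "mat_adjoint A *\<^sub>v u' = 0\<^sub>v n"
      using singular_adjoint_kernel[OF A v(1) _ True] by blast
    define u where "u = complex_of_real (1 / sqrt (Re (u' \<bullet>c u'))) \<cdot>\<^sub>v u'"
    have u: "u \<in> carrier_vec n" "u \<bullet>c u = 1"
      using u' cscalar_prod_normalize_self[OF u'(1,2)] unfolding u_def by auto
    have "mat_adjoint A *\<^sub>v u = 0\<^sub>v n"
      unfolding u_def using mult_mat_vec[OF A' u'(1)] u'(3) by simp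
    then show ?thesis
      using True u v zero_smult_vec of_real_0 by metis
  next
    case False
    then show ?thesis
      using singular_pair_of_eigenvector[OF A v eig] v by blast
  qed
qed

lemma unitary_adjoint_first_col:
  assumes "unitary_mat n U" "n > 0"
  shows "mat_adjoint U *\<^sub>v col U 0 = unit_vec n 0"
  using col_mult2[of "mat_adjoint U" n n U n 0] unitary_mat_cancel(4)[OF assms(1), of U n]
    unitary_mat_carrier[OF assms(1)] assms(2) by simp

lemma exists_unitary_first_row_col_reduction:
  assumes A: "(A :: complex mat) \<in> carrier_mat (Suc m) (Suc m)"
  shows "\<exists>U V s. unitary_mat (Suc m) U \<and> unitary_mat (Suc m) V \<and>
    (\<forall>i < Suc m. (mat_adjoint U * A * V) $$ (i,0) = (if i = 0 then complex_of_real s else 0)) \<and>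
    (\<forall>j < Suc m. (mat_adjoint U * A * V) $$ (0,j) = (if j = 0 then complex_of_real s else 0))"
proof -
  let ?n = "Suc m"
  obtain u v s where uv: "u \<in> carrier_vec ?n" "v \<in> carrier_vec ?n" "u \<bullet>c u = 1" "v \<bullet>c v = 1"
    and Av: "A *\<^sub>v v = complex_of_real s \<cdot>\<^sub>v u" and A'u: "mat_adjoint A *\<^sub>v u = complex_of_real s \<cdot>\<^sub>v v"
    using exists_singular_pair[OF A] by blast
  obtain U where U: "unitary_mat ?n U" "col U 0 = u"
    using unit_vec_extends_to_unitary[OF uv(1,3)] by blast
  obtain V where V: "unitary_mat ?n V" "col V 0 = v"
    using unit_vec_extends_to_unitary[OF uv(2,4)] by blast
  have [simp]: "U \<in> carrier_mat ?n ?n" "V \<in> carrier_mat ?n ?n"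
    using U V unitary_mat_carrier by auto
  define X where "X = mat_adjoint U * A * V"
  have X: "X \<in> carrier_mat ?n ?n"
    unfolding X_def using A by simp
  have X': "mat_adjoint X = mat_adjoint V * mat_adjoint A * U"
    unfolding X_def using A
    by (simp add: mat_adjoint_mult[of _ ?n ?n _ ?n] assoc_mult_mat[of _ ?n ?n _ ?n _ ?n])
  have "col X 0 = mat_adjoint U *\<^sub>v (A *\<^sub>v v)"
    unfolding X_def using A uv V(2) col_mult2[of "mat_adjoint U * A" ?n ?n V ?n 0]
    by (simp add: assoc_mult_mat_vec[of _ ?n ?n _ ?n])
  also have "\<dots> = complex_of_real s \<cdot>\<^sub>v unit_vec ?n 0"
    using uv Av unitary_adjoint_first_col[OF U(1)] U(2) by (simp add: mult_mat_vec[of _ ?n ?n])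
  finally have col_X: "col X 0 = complex_of_real s \<cdot>\<^sub>v unit_vec ?n 0" .
  have "col (mat_adjoint X) 0 = mat_adjoint V *\<^sub>v (mat_adjoint A *\<^sub>v u)"
    unfolding X' using A uv U(2) col_mult2[of "mat_adjoint V * mat_adjoint A" ?n ?n U ?n 0]
    by (simp add: assoc_mult_mat_vec[of _ ?n ?n _ ?n])
  also have "\<dots> = complex_of_real s \<cdot>\<^sub>v unit_vec ?n 0"
    using uv A'u unitary_adjoint_first_col[OF V(1)] V(2) by (simp add: mult_mat_vec[of _ ?n ?n])
  finally have col_X': "col (mat_adjoint X) 0 = complex_of_real s \<cdot>\<^sub>v unit_vec ?n 0" .
  have "X $$ (i,0) = (if i = 0 then complex_of_real s else 0)" if "i < ?n" for i
    using arg_cong[OF col_X, of "\<lambda>w. w $ i"] that X by auto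
  moreover have "X $$ (0,j) = (if j = 0 then complex_of_real s else 0)" if "j < ?n" for j
    using arg_cong[OF col_X', of "\<lambda>w. w $ j"] that X by (auto simp: complex_eq_iff split: if_splits)
  ultimately show ?thesis
    unfolding X_def using U V by blast
qed

lemma adjoint_equivalence_four_block:
  assumes X: "X \<in> carrier_mat (Suc m) (Suc m)"
    and col0: "\<And>i. i < Suc m \<Longrightarrow> X $$ (i,0) = (if i = 0 then complex_of_real s else 0)"
    and row0: "\<And>j. j < Suc m \<Longrightarrow> X $$ (0,j) = (if j = 0 then complex_of_real s else 0)"
    and IH: "\<And>Y. Y \<in> carrier_mat m m \<Longrightarrow> \<exists>P Q. unitary_mat m P \<and> unitary_mat m Q \<and> P * Y * Q = mat_adjoint Y"
  shows "\<exists>P Q. unitary_mat (Suc m) P \<and> unitary_mat (Suc m) Q \<and> P * X * Q = mat_adjoint X"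
proof -
  define S where "S = mat 1 1 (\<lambda>_. complex_of_real s)"
  define Y where "Y = mat m m (\<lambda>(i,j). X $$ (Suc i, Suc j))"
  have blk: "X = four_block_mat S (0\<^sub>m 1 m) (0\<^sub>m m 1) Y"
    unfolding S_def Y_def using X col0 row0 by (intro eq_matI) (auto simp: less_Suc_eq_0_disj)
  have S: "S \<in> carrier_mat 1 1" "mat_adjoint S = S" and Y: "Y \<in> carrier_mat m m"
    unfolding S_def Y_def by (auto intro!: eq_matI)
  obtain P Q where P: "unitary_mat m P" and Q: "unitary_mat m Q" and PQ: "P * Y * Q = mat_adjoint Y"
    using IH[OF Y] by blast
  have [simp]: "P \<in> carrier_mat m m" "Q \<in> carrier_mat m m"
    using P Q unitary_mat_carrier by auto
  let ?P = "four_block_mat (1\<^sub>m 1) (0\<^sub>m 1 m) (0\<^sub>m m 1) P"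
  let ?Q = "four_block_mat (1\<^sub>m 1) (0\<^sub>m 1 m) (0\<^sub>m m 1) Q"
  have "?P * X * ?Q = four_block_mat S (0\<^sub>m 1 m) (0\<^sub>m m 1) (P * Y * Q)"
    unfolding blk using S Y
    by (subst mult_four_block_mat, auto, subst mult_four_block_mat,
        auto simp: carrier_matD[of P m m] carrier_matD[of Q m m])
  also have "\<dots> = mat_adjoint X"
    unfolding PQ blk using S Y by (simp add: mat_adjoint_four_block_diag)
  finally show ?thesis
    using unitary_mat_four_block[OF P] unitary_mat_four_block[OF Q] by blast
qed

lemma adjoint_equivalence_transfer:
  assumes A: "(A :: complex mat) \<in> carrier_mat n n" and U: "unitary_mat n U" and V: "unitary_mat n V"
    and P: "unitary_mat n P" and Q: "unitary_mat n Q"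
    and PQ: "P * (mat_adjoint U * A * V) * Q = mat_adjoint (mat_adjoint U * A * V)"
  shows "(V * P * mat_adjoint U) * A * (V * Q * mat_adjoint U) = mat_adjoint A"
proof -
  have [simp]: "U \<in> carrier_mat n n" "V \<in> carrier_mat n n" "P \<in> carrier_mat n n" "Q \<in> carrier_mat n n"
    using U V P Q unitary_mat_carrier by auto
  have "(V * P * mat_adjoint U) * A * (V * Q * mat_adjoint U)
      = V * ((P * (mat_adjoint U * A * V) * Q) * mat_adjoint U)"
    using A by (simp add: assoc_mult_mat[of _ n n _ n _ n])
  also have "\<dots> = V * (mat_adjoint V * (mat_adjoint A * (U * mat_adjoint U)))"
    unfolding PQ using A
    by (simp add: mat_adjoint_mult[of _ n n _ n] assoc_mult_mat[of _ n n _ n _ n])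
  also have "\<dots> = mat_adjoint A"
    using unitary_mat_cancel(1,3)[OF U, of "mat_adjoint A" n] unitary_mat_cancel(1)[OF V, of "mat_adjoint A" n] A
    by simp
  finally show ?thesis .
qed

text \<open>A singular value decomposition, splitting off one singular pair at a time.\<close>

lemma mat_adjoint_unitarily_equivalent:
  "(A :: complex mat) \<in> carrier_mat n n \<Longrightarrow>
   \<exists>P Q. unitary_mat n P \<and> unitary_mat n Q \<and> P * A * Q = mat_adjoint A"
proof (induction n arbitrary: A)
  case 0
  then have "mat_adjoint A = A"
    by (intro eq_matI) auto
  then show ?case
    using unitary_mat_one[of 0] 0 by (intro exI[of _ "1\<^sub>m 0"]) auto
next
  case (Suc m)
  obtain U V s where U: "unitary_mat (Suc m) U" and V: "unitary_mat (Suc m) V"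
    and first: "\<forall>i < Suc m. (mat_adjoint U * A * V) $$ (i,0) = (if i = 0 then complex_of_real s else 0)"
      "\<forall>j < Suc m. (mat_adjoint U * A * V) $$ (0,j) = (if j = 0 then complex_of_real s else 0)"
    using exists_unitary_first_row_col_reduction[OF Suc.prems] by blast
  have X: "mat_adjoint U * A * V \<in> carrier_mat (Suc m) (Suc m)"
    using Suc.prems U V unitary_mat_carrier by simp
  obtain P Q where P: "unitary_mat (Suc m) P" and Q: "unitary_mat (Suc m) Q"
    and PQ: "P * (mat_adjoint U * A * V) * Q = mat_adjoint (mat_adjoint U * A * V)"
    using adjoint_equivalence_four_block[OF X first(1)[rule_format] first(2)[rule_format] Suc.IH] by blast
  have "unitary_mat (Suc m) (V * P * mat_adjoint U)" "unitary_mat (Suc m) (V * Q * mat_adjoint U)"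
    using U V P Q by (simp_all add: unitary_mat_mult unitary_mat_adjoint)
  then show ?case
    using adjoint_equivalence_transfer[OF Suc.prems U V P Q PQ] by blast
qed

section \<open>Unitarily invariant submultiplicative norms\<close>

locale ui_norm =
  fixes nrm :: "complex mat \<Rightarrow> real"
  assumes ui_submult_norm: "ui_submult_norm nrm"

begin

lemma nrm_eq_0_iff: "A \<in> carrier_mat k k \<Longrightarrow> nrm A = 0 \<longleftrightarrow> A = 0\<^sub>m k k"
  and nrm_add_le: "A \<in> carrier_mat k k \<Longrightarrow> B \<in> carrier_mat k k \<Longrightarrow> nrm (A + B) \<le> nrm A + nrm B"
  and nrm_smult: "A \<in> carrier_mat k k \<Longrightarrow> nrm (a \<cdot>\<^sub>m A) = cmod a * nrm A"
  and nrm_mult_le: "A \<in> carrier_mat k k \<Longrightarrow> B \<in> carrier_mat k k \<Longrightarrow> nrm (A * B) \<le> nrm A * nrm B"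
  and nrm_unitary_invariant:
    "A \<in> carrier_mat k k \<Longrightarrow> unitary_mat k P \<Longrightarrow> unitary_mat k Q \<Longrightarrow> nrm (P * A * Q) = nrm A"
  using ui_submult_norm unfolding ui_submult_norm_def by blast+

lemma nrm_zero [simp]: "nrm (0\<^sub>m k k) = 0"
  using nrm_eq_0_iff[of "0\<^sub>m k k" k] by simp

lemma nrm_uminus: "A \<in> carrier_mat k k \<Longrightarrow> nrm (- A) = nrm A"
  using nrm_smult[of A k "-1"] by (simp add: smult_mat_def uminus_mat_def map_mat_def)

lemma nrm_nonneg: assumes "A \<in> carrier_mat k k" shows "0 \<le> nrm A"
proof -
  have "A + - A = 0\<^sub>m k k"
    using assms by (intro eq_matI) auto
  then show ?thesis
    using nrm_add_le[of A k "- A"] nrm_uminus[of A k] assms by simp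
qed

lemma nrm_minus_commute:
  assumes "A \<in> carrier_mat k k" "B \<in> carrier_mat k k" shows "nrm (A - B) = nrm (B - A)"
proof -
  have "A - B = - (B - A)"
    using assms by (intro eq_matI) auto
  then show ?thesis
    using nrm_uminus[of "B - A" k] assms by simp
qed

lemma nrm_mult_unitary_left: "unitary_mat k P \<Longrightarrow> A \<in> carrier_mat k k \<Longrightarrow> nrm (P * A) = nrm A"
  using nrm_unitary_invariant[of A k P "1\<^sub>m k"] unitary_mat_one unitary_mat_carrier by force

lemma nrm_mult_unitary_right: "unitary_mat k P \<Longrightarrow> A \<in> carrier_mat k k \<Longrightarrow> nrm (A * P) = nrm A"
  using nrm_unitary_invariant[of A k "1\<^sub>m k" P] unitary_mat_one unitary_mat_carrier by force

lemma nrm_adjoint: "A \<in> carrier_mat k k \<Longrightarrow> nrm (mat_adjoint A) = nrm A"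
  using mat_adjoint_unitarily_equivalent nrm_unitary_invariant by metis

lemma nrm_conj_unitary: "unitary_mat k P \<Longrightarrow> A \<in> carrier_mat k k \<Longrightarrow> nrm (P * A * mat_adjoint P) = nrm A"
  using nrm_unitary_invariant unitary_mat_adjoint by blast

lemma nrm_diff_le:
  assumes "A \<in> carrier_mat k k" "B \<in> carrier_mat k k" shows "nrm (A - B) \<le> nrm A + nrm B"
proof -
  have "A - B = A + - B"
    using assms by (intro eq_matI) auto
  then show ?thesis
    using nrm_add_le[of A k "- B"] nrm_uminus[of B k] assms by simp
qed

lemma nrm_le_diff_add:
  assumes "A \<in> carrier_mat k k" "B \<in> carrier_mat k k" shows "nrm A \<le> nrm (A - B) + nrm B"
proof -
  have "A = (A - B) + B"
    using assms by (intro eq_matI) auto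
  then show ?thesis
    using nrm_add_le[of "A - B" k B] assms by simp
qed

lemma nrm_diff_triangle:
  assumes "A \<in> carrier_mat k k" "B \<in> carrier_mat k k" "C \<in> carrier_mat k k"
  shows "nrm (A - C) \<le> nrm (A - B) + nrm (B - C)"
  using nrm_add_le[of "A - B" k "B - C"] assms by (simp add: minus_add_minus_cancel_mat)

lemma nrm_mult_diff_le:
  assumes A: "A \<in> carrier_mat k k" and B: "unitary_mat k B"
    and A': "unitary_mat k A'" and B': "B' \<in> carrier_mat k k"
  shows "nrm (A * B - A' * B') \<le> nrm (A - A') + nrm (B - B')"
proof -
  have [simp]: "B \<in> carrier_mat k k" "A' \<in> carrier_mat k k"
    using B A' unitary_mat_carrier by auto
  have "(A - A') * B + A' * (B - B') = (A * B - A' * B) + (A' * B - A' * B')"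
    using A B' by (simp add: minus_mult_distrib_mat[of _ k k _ _ k] mult_minus_distrib_mat[of _ k k _ k])
  also have "\<dots> = A * B - A' * B'"
    using A B' by (simp add: minus_add_minus_cancel_mat[of _ k k])
  finally have "A * B - A' * B' = (A - A') * B + A' * (B - B')" ..
  then show ?thesis
    using nrm_add_le[of "(A - A') * B" k "A' * (B - B')"] A B'
    by (simp add: nrm_mult_unitary_right[OF B] nrm_mult_unitary_left[OF A'])
qed

lemma nrm_unitary_minus_one_add_adjoint_le:
  assumes Y: "unitary_mat k Y"
  shows "nrm ((Y - 1\<^sub>m k) + mat_adjoint (Y - 1\<^sub>m k)) \<le> nrm (Y - 1\<^sub>m k) ^ 2"
proof -
  have [simp]: "Y \<in> carrier_mat k k"
    using Y unitary_mat_carrier by auto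
  have "nrm ((Y - 1\<^sub>m k) + mat_adjoint (Y - 1\<^sub>m k)) = nrm (mat_adjoint (Y - 1\<^sub>m k) * (Y - 1\<^sub>m k))"
    using unitary_minus_one_add_adjoint[OF Y] nrm_uminus[of "mat_adjoint (Y - 1\<^sub>m k) * (Y - 1\<^sub>m k)" k] by simp
  also have "\<dots> \<le> nrm (mat_adjoint (Y - 1\<^sub>m k)) * nrm (Y - 1\<^sub>m k)"
    by (rule nrm_mult_le[of _ k]) simp_all
  finally show ?thesis
    by (simp add: nrm_adjoint[of _ k] power2_eq_square)
qed

text \<open>Replacing P by T turns the left-hand side into Z + adjoint Z with Z = W T' - 1, where T' is the
  adjoint of T; for the unitary W T' this equals minus (adjoint Z) Z, which is of second order in W - T.\<close>

lemma nrm_unitary_perturbation: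
  assumes T: "unitary_mat k T" and W: "unitary_mat k W" and P: "P \<in> carrier_mat k k"
  shows "nrm ((W - T) * mat_adjoint P + P * mat_adjoint (W - T))
    \<le> nrm (W - T) ^ 2 + 2 * nrm (W - T) * nrm (P - T)"
proof -
  have [simp]: "T \<in> carrier_mat k k" "W \<in> carrier_mat k k"
    using T W unitary_mat_carrier by auto
  define M where "M = W - T"
  define E where "E = P - T"
  define Z where "Z = M * mat_adjoint T"
  have [simp]: "M \<in> carrier_mat k k" "E \<in> carrier_mat k k" "Z \<in> carrier_mat k k"
    unfolding M_def E_def Z_def using P by auto
  have Z: "Z = W * mat_adjoint T - 1\<^sub>m k"
    unfolding Z_def M_def using unitary_mat_cancel(3)[OF T, of T k]
      minus_mult_distrib_mat[of W k k T "mat_adjoint T" k] by simp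
  have "M * mat_adjoint P + P * mat_adjoint M = (Z + mat_adjoint Z) + (M * mat_adjoint E + E * mat_adjoint M)"
    unfolding Z_def E_def by (rule mult_adjoint_add_split) (use P in auto)
  then have "nrm (M * mat_adjoint P + P * mat_adjoint M)
      \<le> nrm (Z + mat_adjoint Z) + (nrm (M * mat_adjoint E) + nrm (E * mat_adjoint M))"
    using nrm_add_le[of "Z + mat_adjoint Z" k "M * mat_adjoint E + E * mat_adjoint M"]
      nrm_add_le[of "M * mat_adjoint E" k "E * mat_adjoint M"] by simp
  moreover have "nrm (Z + mat_adjoint Z) \<le> nrm M ^ 2"
    using nrm_unitary_minus_one_add_adjoint_le[OF unitary_mat_mult[OF W unitary_mat_adjoint[OF T]]]
      nrm_mult_unitary_right[OF unitary_mat_adjoint[OF T], of M]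
    unfolding Z[symmetric] by (simp add: Z_def)
  moreover have "nrm (M * mat_adjoint E) \<le> nrm M * nrm E" "nrm (E * mat_adjoint M) \<le> nrm M * nrm E"
    using nrm_mult_le[of M k "mat_adjoint E"] nrm_mult_le[of E k "mat_adjoint M"]
    by (simp_all add: nrm_adjoint[of E k] nrm_adjoint[of M k] mult.commute)
  ultimately show ?thesis
    unfolding M_def[symmetric] E_def[symmetric] by linarith
qed

lemma nrm_skew_part_le:
  assumes "A \<in> carrier_mat n n" shows "nrm (skew_part A) \<le> nrm A"
proof -
  have "nrm (skew_part A) = nrm (A - mat_adjoint A) / 2"
    unfolding skew_part_def using assms by (simp add: nrm_smult[of _ n])
  also have "\<dots> \<le> nrm A"
    using nrm_add_le[of A n "- mat_adjoint A"] nrm_uminus[of "mat_adjoint A" n] nrm_adjoint[OF assms]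
      assms minus_add_uminus_mat[of A n n "mat_adjoint A"] by simp
  finally show ?thesis .
qed

lemma eqU_refl:
  assumes "\<And>n. A n \<in> carrier_mat (k n) (k n)" shows "eqU F nrm A A"
  unfolding eqU_def using minus_r_inv_mat[OF assms] by simp

end

definition null_seq :: "nat filter \<Rightarrow> (complex mat \<Rightarrow> real) \<Rightarrow> (nat \<Rightarrow> complex mat) \<Rightarrow> bool" where
  "null_seq F nrm A \<longleftrightarrow> ((\<lambda>n. nrm (A n)) \<longlongrightarrow> 0) F"

lemma eqU_iff_null_seq: "eqU F nrm A B \<longleftrightarrow> null_seq F nrm (\<lambda>n. A n - B n)"
  unfolding eqU_def null_seq_def ..

context ui_norm
begin

lemma null_seq_bound:
  assumes A: "\<And>n. A n \<in> carrier_mat (k n) (k n)"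
    and le: "eventually (\<lambda>n. nrm (A n) \<le> f n) F" and f: "(f \<longlongrightarrow> 0) F"
  shows "null_seq F nrm A"
  unfolding null_seq_def
proof (rule tendsto_sandwich[OF _ le tendsto_const f])
  show "eventually (\<lambda>n. 0 \<le> nrm (A n)) F"
    using nrm_nonneg[OF A] by simp
qed

lemma null_seq_add:
  assumes A: "\<And>n. A n \<in> carrier_mat (k n) (k n)" and B: "\<And>n. B n \<in> carrier_mat (k n) (k n)"
    and "null_seq F nrm A" "null_seq F nrm B"
  shows "null_seq F nrm (\<lambda>n. A n + B n)"
proof (rule null_seq_bound[where f = "\<lambda>n. nrm (A n) + nrm (B n)"])
  show "A n + B n \<in> carrier_mat (k n) (k n)" for n
    using A B by simp
  show "eventually (\<lambda>n. nrm (A n + B n) \<le> nrm (A n) + nrm (B n)) F"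
    using nrm_add_le[OF A B] by simp
  show "((\<lambda>n. nrm (A n) + nrm (B n)) \<longlongrightarrow> 0) F"
    using assms(3,4) unfolding null_seq_def by (rule tendsto_add_zero)
qed

lemma null_seq_smult:
  assumes A: "\<And>n. A n \<in> carrier_mat (k n) (k n)" and "null_seq F nrm A"
  shows "null_seq F nrm (\<lambda>n. a \<cdot>\<^sub>m A n)"
  using tendsto_mult_right_zero[of "\<lambda>n. nrm (A n)" F "cmod a"] assms(2)
  unfolding null_seq_def nrm_smult[OF A] .

lemma null_seq_uminus:
  assumes A: "\<And>n. A n \<in> carrier_mat (k n) (k n)" and "null_seq F nrm A"
  shows "null_seq F nrm (\<lambda>n. - A n)"
  using assms(2) unfolding null_seq_def nrm_uminus[OF A] .

lemma null_seq_diff: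
  assumes A: "\<And>n. A n \<in> carrier_mat (k n) (k n)" and B: "\<And>n. B n \<in> carrier_mat (k n) (k n)"
    and "null_seq F nrm A" "null_seq F nrm B"
  shows "null_seq F nrm (\<lambda>n. A n - B n)"
proof -
  have "(\<lambda>n. A n - B n) = (\<lambda>n. A n + - B n)"
    using A B by (intro ext eq_matI) auto
  then show ?thesis
    using null_seq_add[OF A _ assms(3) null_seq_uminus[OF B assms(4)]] B by simp
qed

lemma null_seq_adjoint:
  assumes A: "\<And>n. A n \<in> carrier_mat (k n) (k n)" and "null_seq F nrm A"
  shows "null_seq F nrm (\<lambda>n. mat_adjoint (A n))"
  using assms(2) unfolding null_seq_def nrm_adjoint[OF A] .

lemma null_seq_mult_unitary_right:
  assumes A: "\<And>n. A n \<in> carrier_mat (k n) (k n)" and P: "\<And>n. unitary_mat (k n) (P n)"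
    and "null_seq F nrm A"
  shows "null_seq F nrm (\<lambda>n. A n * P n)"
  using assms(3) unfolding null_seq_def nrm_mult_unitary_right[OF P A] .

lemma null_seq_mult_bounded_left:
  assumes A: "\<And>n. A n \<in> carrier_mat (k n) (k n)" and C: "\<And>n. C n \<in> carrier_mat (k n) (k n)"
    and K: "\<And>n. nrm (C n) \<le> K" and "null_seq F nrm A"
  shows "null_seq F nrm (\<lambda>n. C n * A n)"
proof (rule null_seq_bound[where f = "\<lambda>n. K * nrm (A n)"])
  show "C n * A n \<in> carrier_mat (k n) (k n)" for n
    using A C by simp
  have "nrm (C n * A n) \<le> K * nrm (A n)" for n
    using nrm_mult_le[OF C A] mult_right_mono[OF K nrm_nonneg[OF A]] by (rule order_trans)
  then show "eventually (\<lambda>n. nrm (C n * A n) \<le> K * nrm (A n)) F"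
    by simp
  show "((\<lambda>n. K * nrm (A n)) \<longlongrightarrow> 0) F"
    using assms(4) unfolding null_seq_def by (rule tendsto_mult_right_zero)
qed

end

lemma words_simps [simp]:
  "[] \<in> words S" "x # w \<in> words S \<longleftrightarrow> fst x \<in> S \<and> w \<in> words S"
  "a @ b \<in> words S \<longleftrightarrow> a \<in> words S \<and> b \<in> words S"
  unfolding words_def by auto

lemma mat_word_simps [simp]:
  "mat_word k f [] = 1\<^sub>m k"
  "mat_word k f ((s,e) # w) = (if e then mat_adjoint (f s) else f s) * mat_word k f w"
  unfolding mat_word_def by auto

lemma eval_word_simps:
  "eval_word G gen [] = \<one>\<^bsub>G\<^esub>"
  "eval_word G gen ((s,e) # w) = (if e then inv\<^bsub>G\<^esub> (gen s) else gen s) \<otimes>\<^bsub>G\<^esub> eval_word G gen w"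
  unfolding eval_word_def by auto

lemma (in group) eval_word_closed:
  "gen \<in> S \<rightarrow> carrier G \<Longrightarrow> w \<in> words S \<Longrightarrow> eval_word G gen w \<in> carrier G"
  by (induction w) (auto simp: eval_word_simps Pi_iff)

lemma (in group) eval_word_append:
  assumes gen: "gen \<in> S \<rightarrow> carrier G" and "a \<in> words S" "b \<in> words S"
  shows "eval_word G gen (a @ b) = eval_word G gen a \<otimes> eval_word G gen b"
  using assms(2)
proof (induction a)
  case Nil
  then show ?case
    using eval_word_closed[OF gen assms(3)] by (simp add: eval_word_simps)
next
  case (Cons x a)
  then show ?case
    using gen eval_word_closed[OF gen] assms(3) by (cases x) (auto simp: eval_word_simps m_assoc Pi_iff)
qed

lemma pres_step_words:
  "pres_step S R u v \<Longrightarrow> R \<subseteq> words S \<Longrightarrow> u \<in> words S \<longleftrightarrow> v \<in> words S"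
  unfolding pres_step_def by auto

context
  fixes S :: "'s set" and k :: nat and f :: "'s \<Rightarrow> complex mat"
  assumes f_unitary: "\<And>s. s \<in> S \<Longrightarrow> unitary_mat k (f s)"

begin

lemma mat_word_unitary: "w \<in> words S \<Longrightarrow> unitary_mat k (mat_word k f w)"
proof (induction w)
  case (Cons x w)
  then show ?case
    using f_unitary by (cases x) (auto intro!: unitary_mat_mult unitary_mat_adjoint)
qed (simp add: unitary_mat_one)

lemma mat_word_carrier: "w \<in> words S \<Longrightarrow> mat_word k f w \<in> carrier_mat k k"
  using mat_word_unitary unitary_mat_carrier by blast

lemma mat_word_append:
  "a \<in> words S \<Longrightarrow> b \<in> words S \<Longrightarrow> mat_word k f (a @ b) = mat_word k f a * mat_word k f b"
proof (induction a)
  case Nil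
  then show ?case
    using mat_word_carrier[of b] by simp
next
  case (Cons x a)
  obtain s e where x: "x = (s,e)"
    by (cases x)
  have "(if e then mat_adjoint (f s) else f s) \<in> carrier_mat k k"
    using Cons.prems f_unitary[of s] x unitary_mat_carrier by auto
  then show ?case
    using Cons x mat_word_carrier by (simp add: assoc_mult_mat[of _ k k _ k _ k])
qed

lemma mat_word_pres_step:
  assumes rel: "\<And>r. r \<in> R \<Longrightarrow> mat_word k f r = 1\<^sub>m k" and RS: "R \<subseteq> words S"
    and step: "pres_step S R u v" and u: "u \<in> words S"
  shows "mat_word k f u = mat_word k f v"
  using step unfolding pres_step_def
proof (elim disjE exE conjE)
  fix a b s e assume s: "s \<in> S" and uv: "u = a @ [(s,e),(s,\<not>e)] @ b" "v = a @ b"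
  have "mat_word k f ([(s,e),(s,\<not>e)] @ b) = mat_word k f b"
    using unitary_mat_cancel(1,2)[OF f_unitary[OF s] mat_word_carrier] u uv by auto
  then show ?thesis
    using mat_word_append u s uv by simp
next
  fix a b r assume r: "r \<in> R" and uv: "u = a @ r @ b" "v = a @ b"
  have "mat_word k f (r @ b) = mat_word k f b"
    using mat_word_append rel[OF r] mat_word_carrier[of b] u uv by simp
  then show ?thesis
    using mat_word_append u uv by simp
qed

lemma mat_word_equivclp:
  assumes rel: "\<And>r. r \<in> R \<Longrightarrow> mat_word k f r = 1\<^sub>m k" and RS: "R \<subseteq> words S"
    and eq: "equivclp (pres_step S R) u v" and u: "u \<in> words S"
  shows "mat_word k f u = mat_word k f v"
proof -
  have "(symclp (pres_step S R))\<^sup>*\<^sup>* u v"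
    using eq unfolding equivclp_def .
  then have "v \<in> words S \<and> mat_word k f u = mat_word k f v"
  proof (induction rule: rtranclp_induct)
    case (step y z)
    then have "z \<in> words S \<and> mat_word k f y = mat_word k f z"
      using mat_word_pres_step[OF rel RS] pres_step_words[OF _ RS] unfolding symclp_def by metis
    with step show ?case
      by simp
  qed (use u in simp)
  then show ?thesis ..
qed

end

section \<open>Asymptotic representations of a finitely presented group\<close>

locale almost_rep = ui_norm nrm + group G
  for nrm :: "complex mat \<Rightarrow> real" and G :: "('g, 'm) monoid_scheme" (structure) +
  fixes U :: "nat filter" and S :: "'s set" and R :: "'s word set" and gen :: "'s \<Rightarrow> 'g"
    and k :: "nat \<Rightarrow> nat" and \<phi> :: "nat \<Rightarrow> 's \<Rightarrow> complex mat"
    and \<sigma> :: "'g \<Rightarrow> 's word" and \<phi>t :: "nat \<Rightarrow> 'g \<Rightarrow> complex mat"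
  assumes pres: "is_presentation G S R gen" and finR: "finite R"
    and phi_unitary: "\<And>n s. s \<in> S \<Longrightarrow> unitary_mat (k n) (\<phi> n s)"
    and def_lim: "((\<lambda>n. defect nrm R (k n) (\<phi> n)) \<longlongrightarrow> 0) U"
    and sigma: "\<And>g. g \<in> carrier G \<Longrightarrow> \<sigma> g \<in> words S \<and> eval_word G gen (\<sigma> g) = g"
    and phit_unitary: "\<And>n g. g \<in> carrier G \<Longrightarrow> unitary_mat (k n) (\<phi>t n g)"
    and phit_one: "\<And>n. \<phi>t n \<one>\<^bsub>G\<^esub> = 1\<^sub>m (k n)"
    and phit_inv: "\<And>n g. g \<in> carrier G \<Longrightarrow> \<phi>t n (inv\<^bsub>G\<^esub> g) = mat_adjoint (\<phi>t n g)"
    and phit_close: "\<And>g. g \<in> carrier G \<Longrightarrow> \<exists>C. eventually (\<lambda>n.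
           nrm (mat_word (k n) (\<phi> n) (\<sigma> g) - \<phi>t n g) \<le> C * defect nrm R (k n) (\<phi> n)) U"
begin

abbreviation "\<delta> n \<equiv> defect nrm R (k n) (\<phi> n)"

abbreviation "\<Phi> \<equiv> phiU k \<phi> \<sigma>"

abbreviation "cseq \<equiv> c_seq G nrm R k \<phi> \<phi>t"

abbreviation "\<alpha>seq \<equiv> alpha_seq G nrm R k \<phi> \<sigma> \<phi>t"

abbreviation "is_coboundary \<equiv> alpha_coboundary U G nrm R k \<phi> \<sigma> \<phi>t"

abbreviation "coboundary \<beta> g h n \<equiv> \<Phi> g n * \<beta> h n * mat_adjoint (\<Phi> g n) - \<beta> (g \<otimes> h) n + \<beta> g n"

lemma gen_closed: "gen \<in> S \<rightarrow> carrier G" and R_words: "R \<subseteq> words S"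
  using pres unfolding is_presentation_def by auto

lemma eval_word_eq_iff:
  "w \<in> words S \<Longrightarrow> w' \<in> words S \<Longrightarrow>
   eval_word G gen w = eval_word G gen w' \<longleftrightarrow> equivclp (pres_step S R) w w'"
  using pres unfolding is_presentation_def by blast

lemma Phi_unitary: "g \<in> carrier G \<Longrightarrow> unitary_mat (k n) (\<Phi> g n)"
  unfolding phiU_def using mat_word_unitary[of S "k n" "\<phi> n"] phi_unitary sigma by blast

lemma Phi_carrier [simp]: "g \<in> carrier G \<Longrightarrow> \<Phi> g n \<in> carrier_mat (k n) (k n)"
  and phit_carrier [simp]: "g \<in> carrier G \<Longrightarrow> \<phi>t n g \<in> carrier_mat (k n) (k n)"
  using Phi_unitary phit_unitary unitary_mat_carrier by blast+

lemma Phi_dim [simp]: "g \<in> carrier G \<Longrightarrow> dim_row (\<Phi> g n) = k n" "g \<in> carrier G \<Longrightarrow> dim_col (\<Phi> g n) = k n"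
  and phit_dim [simp]: "g \<in> carrier G \<Longrightarrow> dim_row (\<phi>t n g) = k n" "g \<in> carrier G \<Longrightarrow> dim_col (\<phi>t n g) = k n"
  using carrier_matD[OF Phi_carrier] carrier_matD[OF phit_carrier] by auto

lemma cseq_carrier [simp]: "g \<in> carrier G \<Longrightarrow> h \<in> carrier G \<Longrightarrow> cseq g h n \<in> carrier_mat (k n) (k n)"
  unfolding c_seq_def by simp

lemma alpha_seq_eq: "\<alpha>seq g h n = cseq g h n * mat_adjoint (\<Phi> (g \<otimes> h) n)"
  unfolding alpha_seq_def ..

lemma alpha_seq_carrier [simp]:
  "g \<in> carrier G \<Longrightarrow> h \<in> carrier G \<Longrightarrow> \<alpha>seq g h n \<in> carrier_mat (k n) (k n)"
  unfolding alpha_seq_eq by simp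

lemma nrm_alpha_seq: "g \<in> carrier G \<Longrightarrow> h \<in> carrier G \<Longrightarrow> nrm (\<alpha>seq g h n) = nrm (cseq g h n)"
  unfolding alpha_seq_eq by (simp add: nrm_mult_unitary_right[OF unitary_mat_adjoint[OF Phi_unitary]])

lemma alpha_seq_eq_zero:
  assumes "g \<in> carrier G" "h \<in> carrier G" "\<phi>t n g * \<phi>t n h = \<phi>t n (g \<otimes> h)"
  shows "\<alpha>seq g h n = 0\<^sub>m (k n) (k n)"
  unfolding alpha_seq_eq c_seq_def assms(3) minus_r_inv_mat[OF phit_carrier[OF m_closed[OF assms(1,2)]]]
  using assms(1,2) by simp

lemma defect_nonneg: "0 \<le> \<delta> n"
  unfolding defect_def using finR by (intro Max_ge) auto

lemma nrm_phit_mult_diff: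
  assumes "g \<in> carrier G" "h \<in> carrier G" "\<delta> n > 0"
  shows "nrm (\<phi>t n g * \<phi>t n h - \<phi>t n (g \<otimes> h)) = \<delta> n * nrm (cseq g h n)"
  using assms unfolding c_seq_def by (simp add: nrm_smult[of _ "k n"] norm_divide)

lemma Phi_mult_of_defect_zero:
  assumes d: "\<delta> n = 0" and g: "g \<in> carrier G" and h: "h \<in> carrier G"
  shows "\<Phi> (g \<otimes> h) n = \<Phi> g n * \<Phi> h n"
proof -
  have rel: "mat_word (k n) (\<phi> n) r = 1\<^sub>m (k n)" if r: "r \<in> R" for r
  proof -
    have "nrm (mat_word (k n) (\<phi> n) r - 1\<^sub>m (k n)) \<le> \<delta> n"
      unfolding defect_def using finR r by (intro Max_ge) auto
    then have "mat_word (k n) (\<phi> n) r - 1\<^sub>m (k n) = 0\<^sub>m (k n) (k n)"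
      using nrm_nonneg[of _ "k n"] nrm_eq_0_iff[of _ "k n"] d by (metis one_carrier_mat minus_carrier_mat order_antisym)
    moreover have "mat_word (k n) (\<phi> n) r \<in> carrier_mat (k n) (k n)"
      using R_words r by (intro mat_word_carrier phi_unitary) auto
    ultimately show ?thesis
      using eq_of_minus_eq_zero_mat one_carrier_mat by blast
  qed
  have "eval_word G gen (\<sigma> g @ \<sigma> h) = eval_word G gen (\<sigma> (g \<otimes> h))"
    using sigma g h eval_word_append[OF gen_closed] by simp
  then have "equivclp (pres_step S R) (\<sigma> g @ \<sigma> h) (\<sigma> (g \<otimes> h))"
    using eval_word_eq_iff[of "\<sigma> g @ \<sigma> h" "\<sigma> (g \<otimes> h)"] sigma g h by simp
  then have "mat_word (k n) (\<phi> n) (\<sigma> g @ \<sigma> h) = \<Phi> (g \<otimes> h) n"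
    unfolding phiU_def using mat_word_equivclp[of S "k n" "\<phi> n", OF phi_unitary rel R_words] sigma g h
    by simp
  then show ?thesis
    unfolding phiU_def using mat_word_append[of S "k n" "\<phi> n", OF phi_unitary] sigma g h by simp
qed

lemma nrm_Phi_mult_diff_le:
  assumes g: "g \<in> carrier G" and h: "h \<in> carrier G" and d: "\<delta> n > 0"
  shows "nrm (\<Phi> (g \<otimes> h) n - \<Phi> g n * \<Phi> h n)
    \<le> nrm (\<Phi> (g \<otimes> h) n - \<phi>t n (g \<otimes> h)) + \<delta> n * nrm (cseq g h n)
      + (nrm (\<Phi> g n - \<phi>t n g) + nrm (\<Phi> h n - \<phi>t n h))"
proof -
  have "nrm (\<Phi> (g \<otimes> h) n - \<Phi> g n * \<Phi> h n)
      \<le> nrm (\<Phi> (g \<otimes> h) n - \<phi>t n (g \<otimes> h)) + nrm (\<phi>t n (g \<otimes> h) - \<phi>t n g * \<phi>t n h)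
        + nrm (\<phi>t n g * \<phi>t n h - \<Phi> g n * \<Phi> h n)"
    using nrm_diff_triangle[of "\<Phi> (g \<otimes> h) n" "k n" "\<phi>t n (g \<otimes> h)" "\<Phi> g n * \<Phi> h n"]
      nrm_diff_triangle[of "\<phi>t n (g \<otimes> h)" "k n" "\<phi>t n g * \<phi>t n h" "\<Phi> g n * \<Phi> h n"] g h
    by simp
  moreover have "nrm (\<phi>t n (g \<otimes> h) - \<phi>t n g * \<phi>t n h) = \<delta> n * nrm (cseq g h n)"
    using nrm_phit_mult_diff[OF g h d] nrm_minus_commute[of "\<phi>t n (g \<otimes> h)" "k n"] g h by simp
  moreover have "nrm (\<phi>t n g * \<phi>t n h - \<Phi> g n * \<Phi> h n) \<le> nrm (\<Phi> g n - \<phi>t n g) + nrm (\<Phi> h n - \<phi>t n h)"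
    using nrm_mult_diff_le[of "\<phi>t n g" "k n" "\<phi>t n h" "\<Phi> g n" "\<Phi> h n"] phit_unitary Phi_unitary
      nrm_minus_commute[of "\<phi>t n g" "k n"] nrm_minus_commute[of "\<phi>t n h" "k n"] g h by simp
  ultimately show ?thesis
    by linarith
qed

lemma nrm_alpha_seq_skew_le:
  assumes g: "g \<in> carrier G" and h: "h \<in> carrier G" and d: "\<delta> n > 0"
  shows "nrm (\<alpha>seq g h n + mat_adjoint (\<alpha>seq g h n))
    \<le> \<delta> n * nrm (cseq g h n) ^ 2 + 2 * nrm (cseq g h n) * nrm (\<Phi> (g \<otimes> h) n - \<phi>t n (g \<otimes> h))"
proof -
  define M where "M = \<phi>t n g * \<phi>t n h - \<phi>t n (g \<otimes> h)"
  define P where "P = \<Phi> (g \<otimes> h) n"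
  have [simp]: "M \<in> carrier_mat (k n) (k n)" "P \<in> carrier_mat (k n) (k n)"
    unfolding M_def P_def using g h by simp_all
  have c: "cseq g h n = complex_of_real (1 / \<delta> n) \<cdot>\<^sub>m M"
    unfolding c_seq_def M_def using d by simp
  have "\<alpha>seq g h n + mat_adjoint (\<alpha>seq g h n)
      = complex_of_real (1 / \<delta> n) \<cdot>\<^sub>m (M * mat_adjoint P + P * mat_adjoint M)"
    unfolding alpha_seq_eq c P_def[symmetric]
    by (simp add: mult_smult_assoc_mat[of _ "k n" "k n" _ "k n"] mat_adjoint_smult
        mat_adjoint_mult[of _ "k n" "k n" _ "k n"] add_smult_distrib_left_mat[of _ "k n" "k n"])
  then have "nrm (\<alpha>seq g h n + mat_adjoint (\<alpha>seq g h n)) = nrm (M * mat_adjoint P + P * mat_adjoint M) / \<delta> n"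
    using d by (simp add: nrm_smult[of _ "k n"] norm_divide)
  also have "\<dots> \<le> (nrm M ^ 2 + 2 * nrm M * nrm (P - \<phi>t n (g \<otimes> h))) / \<delta> n"
    unfolding M_def using d g h
      nrm_unitary_perturbation[OF phit_unitary unitary_mat_mult[OF phit_unitary[OF g] phit_unitary[OF h]]]
    by (simp add: divide_right_mono)
  also have "\<dots> = \<delta> n * nrm (cseq g h n) ^ 2 + 2 * nrm (cseq g h n) * nrm (P - \<phi>t n (g \<otimes> h))"
    using nrm_phit_mult_diff[OF g h d] d unfolding M_def by (simp add: field_simps power2_eq_square)
  finally show ?thesis
    unfolding P_def .
qed

context
  fixes \<beta> :: "'g \<Rightarrow> nat \<Rightarrow> complex mat"
  assumes beta: "is_coboundary \<beta>"

begin

lemma beta_carrier [simp]: "g \<in> carrier G \<Longrightarrow> \<beta> g n \<in> carrier_mat (k n) (k n)"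
  using beta unfolding alpha_coboundary_def MU_seq_def by blast

lemma beta_dim [simp]: "g \<in> carrier G \<Longrightarrow> dim_row (\<beta> g n) = k n" "g \<in> carrier G \<Longrightarrow> dim_col (\<beta> g n) = k n"
  using carrier_matD[OF beta_carrier] by auto

lemma beta_bounded: "g \<in> carrier G \<Longrightarrow> \<exists>K. \<forall>n. nrm (\<beta> g n) \<le> K"
  using beta unfolding alpha_coboundary_def MU_seq_def by blast

lemma alpha_seq_approx:
  "g \<in> carrier G \<Longrightarrow> h \<in> carrier G \<Longrightarrow> null_seq U nrm (\<lambda>n. \<alpha>seq g h n - coboundary \<beta> g h n)"
  using beta unfolding alpha_coboundary_def eqU_iff_null_seq by blast

lemma cseq_bounded:
  assumes g: "g \<in> carrier G" and h: "h \<in> carrier G"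
  shows "\<exists>B. eventually (\<lambda>n. nrm (cseq g h n) \<le> B) U"
proof -
  obtain K1 K2 K3 where K: "\<And>n. nrm (\<beta> h n) \<le> K1" "\<And>n. nrm (\<beta> (g \<otimes> h) n) \<le> K2" "\<And>n. nrm (\<beta> g n) \<le> K3"
    using beta_bounded g h m_closed by meson
  have "eventually (\<lambda>n. nrm (\<alpha>seq g h n - coboundary \<beta> g h n) < 1) U"
    using alpha_seq_approx[OF g h] unfolding null_seq_def by (rule order_tendstoD) simp
  then have "eventually (\<lambda>n. nrm (cseq g h n) \<le> 1 + (K1 + K2 + K3)) U"
  proof eventually_elim
    case (elim n)
    have "nrm (coboundary \<beta> g h n) \<le> nrm (\<beta> h n) + nrm (\<beta> (g \<otimes> h) n) + nrm (\<beta> g n)"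
      using nrm_add_le[of "\<Phi> g n * \<beta> h n * mat_adjoint (\<Phi> g n) - \<beta> (g \<otimes> h) n" "k n" "\<beta> g n"]
        nrm_diff_le[of "\<Phi> g n * \<beta> h n * mat_adjoint (\<Phi> g n)" "k n" "\<beta> (g \<otimes> h) n"] g h
        nrm_conj_unitary[OF Phi_unitary[OF g], of "\<beta> h n" n]
      by simp
    moreover have "nrm (\<alpha>seq g h n) \<le> nrm (\<alpha>seq g h n - coboundary \<beta> g h n) + nrm (coboundary \<beta> g h n)"
      using nrm_le_diff_add[of "\<alpha>seq g h n" "k n" "coboundary \<beta> g h n"] g h by simp
    ultimately show ?case
      using elim K[of n] nrm_alpha_seq[OF g h, of n] by linarith
  qed
  then show ?thesis ..
qed

lemma Phi_mult_approx:
  assumes g: "g \<in> carrier G" and h: "h \<in> carrier G"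
  shows "null_seq U nrm (\<lambda>n. \<Phi> (g \<otimes> h) n - \<Phi> g n * \<Phi> h n)"
proof -
  have gh: "g \<otimes> h \<in> carrier G"
    using g h by simp
  obtain Cg Ch Cgh B where
    "eventually (\<lambda>n. nrm (\<Phi> g n - \<phi>t n g) \<le> Cg * \<delta> n) U"
    "eventually (\<lambda>n. nrm (\<Phi> h n - \<phi>t n h) \<le> Ch * \<delta> n) U"
    "eventually (\<lambda>n. nrm (\<Phi> (g \<otimes> h) n - \<phi>t n (g \<otimes> h)) \<le> Cgh * \<delta> n) U"
    "eventually (\<lambda>n. nrm (cseq g h n) \<le> B) U"
    using phit_close[OF g] phit_close[OF h] phit_close[OF gh] cseq_bounded[OF g h]
    unfolding phiU_def by meson
  then have "eventually (\<lambda>n. nrm (\<Phi> (g \<otimes> h) n - \<Phi> g n * \<Phi> h n) \<le> (Cgh + B + Cg + Ch) * \<delta> n) U"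
  proof eventually_elim
    case (elim n)
    show ?case
    proof (cases "\<delta> n > 0")
      case True
      have "(Cgh + B + Cg + Ch) * \<delta> n = Cgh * \<delta> n + \<delta> n * B + (Cg * \<delta> n + Ch * \<delta> n)"
        by (simp add: algebra_simps)
      then show ?thesis
        using nrm_Phi_mult_diff_le[OF g h True] elim mult_left_mono[OF elim(4) less_imp_le[OF True]]
        by linarith
    next
      case False
      then show ?thesis
        using Phi_mult_of_defect_zero[OF _ g h, of n] defect_nonneg[of n]
          minus_r_inv_mat[OF mult_carrier_mat_square[OF Phi_carrier[OF g] Phi_carrier[OF h]]] by simp
    qed
  qed
  moreover have "((\<lambda>n. (Cgh + B + Cg + Ch) * \<delta> n) \<longlongrightarrow> 0) U"
    using def_lim by (rule tendsto_mult_right_zero)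
  ultimately show ?thesis
    by (intro null_seq_bound[of _ k]) (use g h gh in simp_all)
qed

lemma alpha_seq_skew_approx:
  assumes g: "g \<in> carrier G" and h: "h \<in> carrier G"
  shows "null_seq U nrm (\<lambda>n. \<alpha>seq g h n + mat_adjoint (\<alpha>seq g h n))"
proof -
  have gh: "g \<otimes> h \<in> carrier G"
    using g h by simp
  obtain C B where
    "eventually (\<lambda>n. nrm (\<Phi> (g \<otimes> h) n - \<phi>t n (g \<otimes> h)) \<le> C * \<delta> n) U"
    "eventually (\<lambda>n. nrm (cseq g h n) \<le> B) U"
    using phit_close[OF gh] cseq_bounded[OF g h] unfolding phiU_def by meson
  then have "eventually (\<lambda>n. nrm (\<alpha>seq g h n + mat_adjoint (\<alpha>seq g h n)) \<le> (B ^ 2 + 2 * B * C) * \<delta> n) U"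
  proof eventually_elim
    case (elim n)
    show ?case
    proof (cases "\<delta> n > 0")
      case True
      have "\<delta> n * nrm (cseq g h n) ^ 2 + 2 * nrm (cseq g h n) * nrm (\<Phi> (g \<otimes> h) n - \<phi>t n (g \<otimes> h))
          \<le> \<delta> n * B ^ 2 + 2 * B * (C * \<delta> n)"
        using elim True nrm_nonneg[of "cseq g h n" "k n"] nrm_nonneg[of "\<Phi> (g \<otimes> h) n - \<phi>t n (g \<otimes> h)" "k n"] g h
        by (intro add_mono mult_left_mono mult_mono power_mono) auto
      then show ?thesis
        using nrm_alpha_seq_skew_le[OF g h True] by (simp add: algebra_simps)
    next
      case False
      then show ?thesis
        using defect_nonneg[of n] g h by (simp add: alpha_seq_eq c_seq_def)
    qed
  qed
  moreover have "((\<lambda>n. (B ^ 2 + 2 * B * C) * \<delta> n) \<longlongrightarrow> 0) U"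
    using def_lim by (rule tendsto_mult_right_zero)
  ultimately show ?thesis
    by (intro null_seq_bound[of _ k]) (use g h in simp_all)
qed

lemma coboundary_one: "eqU U nrm (\<beta> \<one>) (\<lambda>n. 0\<^sub>m (k n) (k n))"
proof -
  have "nrm (\<beta> \<one> n - 0\<^sub>m (k n) (k n)) = nrm (\<alpha>seq \<one> \<one> n - coboundary \<beta> \<one> \<one> n)" for n
  proof -
    have "\<alpha>seq \<one> \<one> n = 0\<^sub>m (k n) (k n)"
      by (rule alpha_seq_eq_zero) (simp_all add: phit_one)
    moreover have "0\<^sub>m m m - (X - B + B) = - X" if "X \<in> carrier_mat m m" "B \<in> carrier_mat m m"
      for X B :: "complex mat" and m
      using that by (intro eq_matI) auto
    ultimately have "\<alpha>seq \<one> \<one> n - coboundary \<beta> \<one> \<one> n = - (\<Phi> \<one> n * \<beta> \<one> n * mat_adjoint (\<Phi> \<one> n))"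
      by simp
    moreover have "\<beta> \<one> n - 0\<^sub>m (k n) (k n) = \<beta> \<one> n"
      by (intro eq_matI) auto
    ultimately show ?thesis
      by (simp add: nrm_uminus[of _ "k n"] nrm_conj_unitary[OF Phi_unitary])
  qed
  then show ?thesis
    using alpha_seq_approx[of \<one> \<one>] unfolding eqU_def null_seq_def by simp
qed

lemma coboundary_inv:
  assumes g: "g \<in> carrier G"
  shows "eqU U nrm (\<beta> g) (\<lambda>n. - (\<Phi> g n * \<beta> (inv g) n * mat_adjoint (\<Phi> g n)))"
proof -
  have [simp]: "inv g \<in> carrier G" "g \<otimes> inv g = \<one>"
    using g by simp_all
  have regroup: "B - - X = (C - 0\<^sub>m m m) - (0\<^sub>m m m - (X - C + B))"
    if "X \<in> carrier_mat m m" "B \<in> carrier_mat m m" "C \<in> carrier_mat m m" for X B C :: "complex mat" and m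
    using that by (intro eq_matI) auto
  have "(\<lambda>n. \<beta> g n - - (\<Phi> g n * \<beta> (inv g) n * mat_adjoint (\<Phi> g n)))
      = (\<lambda>n. (\<beta> \<one> n - 0\<^sub>m (k n) (k n)) - (\<alpha>seq g (inv g) n - coboundary \<beta> g (inv g) n))"
  proof (rule ext)
    fix n
    have "\<alpha>seq g (inv g) n = 0\<^sub>m (k n) (k n)"
      using g unitary_mat_cancel(3)[OF phit_unitary[OF g, of n], of "\<phi>t n g" "k n"]
      by (intro alpha_seq_eq_zero) (simp_all add: phit_one phit_inv)
    then show "\<beta> g n - - (\<Phi> g n * \<beta> (inv g) n * mat_adjoint (\<Phi> g n))
      = (\<beta> \<one> n - 0\<^sub>m (k n) (k n)) - (\<alpha>seq g (inv g) n - coboundary \<beta> g (inv g) n)"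
      using g regroup[of "\<Phi> g n * \<beta> (inv g) n * mat_adjoint (\<Phi> g n)" "k n" "\<beta> g n" "\<beta> \<one> n"] by simp
  qed
  moreover have "null_seq U nrm (\<lambda>n. (\<beta> \<one> n - 0\<^sub>m (k n) (k n)) - (\<alpha>seq g (inv g) n - coboundary \<beta> g (inv g) n))"
    by (rule null_seq_diff[where k = k,
          OF _ _ coboundary_one[unfolded eqU_iff_null_seq] alpha_seq_approx[OF g inv_closed[OF g]]])
      (use g in simp_all)
  ultimately show ?thesis
    unfolding eqU_iff_null_seq by simp
qed

lemma cseq_coboundary:
  assumes g: "g \<in> carrier G" and h: "h \<in> carrier G"
  shows "eqU U nrm (cseq g h)
    (\<lambda>n. \<Phi> g n * \<beta> h n * \<Phi> h n - \<beta> (g \<otimes> h) n * \<Phi> (g \<otimes> h) n + \<beta> g n * \<Phi> (g \<otimes> h) n)"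
proof -
  have gh: "g \<otimes> h \<in> carrier G"
    using g h by simp
  have "cseq g h n = \<alpha>seq g h n * \<Phi> (g \<otimes> h) n" for n
    unfolding alpha_seq_eq using unitary_mat_cancel(4)[OF Phi_unitary[OF gh, of n], of "\<Phi> (g \<otimes> h) n" "k n"]
      right_mult_one_mat[OF cseq_carrier[OF g h]] g h
    by (simp add: assoc_mult_mat[of _ "k n" "k n" _ "k n" _ "k n"])
  then have identity: "cseq g h n
      - (\<Phi> g n * \<beta> h n * \<Phi> h n - \<beta> (g \<otimes> h) n * \<Phi> (g \<otimes> h) n + \<beta> g n * \<Phi> (g \<otimes> h) n)
      = (\<alpha>seq g h n - coboundary \<beta> g h n) * \<Phi> (g \<otimes> h) n
        + (\<Phi> g n * \<beta> h n * mat_adjoint (\<Phi> g n)) * (\<Phi> (g \<otimes> h) n - \<Phi> g n * \<Phi> h n)" for n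
    using conj_mult_diff_split[OF Phi_unitary[OF g]] g h gh by simp
  obtain K where "\<And>n. nrm (\<beta> h n) \<le> K"
    using beta_bounded[OF h] by blast
  then have bound: "\<And>n. nrm (\<Phi> g n * \<beta> h n * mat_adjoint (\<Phi> g n)) \<le> K"
    using h by (simp add: nrm_conj_unitary[OF Phi_unitary[OF g]])
  have "null_seq U nrm (\<lambda>n. (\<alpha>seq g h n - coboundary \<beta> g h n) * \<Phi> (g \<otimes> h) n
      + (\<Phi> g n * \<beta> h n * mat_adjoint (\<Phi> g n)) * (\<Phi> (g \<otimes> h) n - \<Phi> g n * \<Phi> h n))"
    by (rule null_seq_add[where k = k,
          OF _ _ null_seq_mult_unitary_right[where k = k, OF _ Phi_unitary[OF gh] alpha_seq_approx[OF g h]]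
          null_seq_mult_bounded_left[where k = k, OF _ _ bound Phi_mult_approx[OF g h]]])
      (use g h in simp_all)
  with identity show ?thesis
    unfolding eqU_iff_null_seq by simp
qed

lemma is_coboundary_skew_part: "is_coboundary (\<lambda>g n. skew_part (\<beta> g n))"
  unfolding alpha_coboundary_def
proof (intro conjI ballI)
  show "MU_seq nrm k (\<lambda>n. skew_part (\<beta> g n))" if g: "g \<in> carrier G" for g
  proof -
    obtain K where K: "\<And>n. nrm (\<beta> g n) \<le> K"
      using beta_bounded[OF g] by blast
    have "nrm (skew_part (\<beta> g n)) \<le> K" for n
      using nrm_skew_part_le[of "\<beta> g n" "k n"] K[of n] g by simp
    then show ?thesis
      unfolding MU_seq_def using g by auto
  qed
  show "eqU U nrm (\<alpha>seq g h) (coboundary (\<lambda>g n. skew_part (\<beta> g n)) g h)"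
    if g: "g \<in> carrier G" and h: "h \<in> carrier G" for g h
  proof -
    have decomp: "X - skew_part Y = (1/2 :: complex) \<cdot>\<^sub>m ((X + mat_adjoint X) + ((X - Y) - mat_adjoint (X - Y)))"
      if "X \<in> carrier_mat m m" "Y \<in> carrier_mat m m" for X Y :: "complex mat" and m
      using that unfolding skew_part_def by (intro eq_matI) (auto simp: field_simps)
    have "(\<lambda>n. \<alpha>seq g h n - coboundary (\<lambda>g n. skew_part (\<beta> g n)) g h n)
      = (\<lambda>n. (1/2 :: complex) \<cdot>\<^sub>m ((\<alpha>seq g h n + mat_adjoint (\<alpha>seq g h n))
          + ((\<alpha>seq g h n - coboundary \<beta> g h n) - mat_adjoint (\<alpha>seq g h n - coboundary \<beta> g h n))))"
    proof (rule ext)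
      fix n
      have "coboundary (\<lambda>g n. skew_part (\<beta> g n)) g h n = skew_part (coboundary \<beta> g h n)"
        using g h by (simp add: skew_part_conj[of _ "k n"] skew_part_add_diff[of _ "k n"])
      then show "\<alpha>seq g h n - coboundary (\<lambda>g n. skew_part (\<beta> g n)) g h n
        = (1/2 :: complex) \<cdot>\<^sub>m ((\<alpha>seq g h n + mat_adjoint (\<alpha>seq g h n))
          + ((\<alpha>seq g h n - coboundary \<beta> g h n) - mat_adjoint (\<alpha>seq g h n - coboundary \<beta> g h n)))"
        using decomp[of "\<alpha>seq g h n" "k n" "coboundary \<beta> g h n"] g h by simp
    qed
    moreover have "null_seq U nrm (\<lambda>n. (1/2 :: complex) \<cdot>\<^sub>m ((\<alpha>seq g h n + mat_adjoint (\<alpha>seq g h n))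
          + ((\<alpha>seq g h n - coboundary \<beta> g h n) - mat_adjoint (\<alpha>seq g h n - coboundary \<beta> g h n))))"
      by (rule null_seq_smult[where k = k, OF _ null_seq_add[where k = k, OF _ _ alpha_seq_skew_approx[OF g h]
          null_seq_diff[where k = k, OF _ _ alpha_seq_approx[OF g h]
            null_seq_adjoint[where k = k, OF _ alpha_seq_approx[OF g h]]]]])
        (use g h in simp_all)
    ultimately show ?thesis
      unfolding eqU_iff_null_seq by simp
  qed
qed

lemma exists_skew_coboundary:
  "\<exists>\<beta>'. is_coboundary \<beta>' \<and> (\<forall>g\<in>carrier G. eqU U nrm (\<lambda>n. mat_adjoint (\<beta>' g n)) (\<lambda>n. - \<beta>' g n))"
proof (intro exI conjI ballI)
  show "is_coboundary (\<lambda>g n. skew_part (\<beta> g n))"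
    by (rule is_coboundary_skew_part)
  show "eqU U nrm (\<lambda>n. mat_adjoint (skew_part (\<beta> g n))) (\<lambda>n. - skew_part (\<beta> g n))" if "g \<in> carrier G" for g
  proof -
    have "mat_adjoint (skew_part (\<beta> g n)) = - skew_part (\<beta> g n)" for n
      using that by (simp add: mat_adjoint_skew_part[of _ "k n"])
    then show ?thesis
      using eqU_refl[of "\<lambda>n. - skew_part (\<beta> g n)" k U] that by simp
  qed
qed

end

end

theorem proposition3p3:
  fixes U :: "nat filter"
    and G :: "('g, 'm) monoid_scheme" and S :: "'s set" and R :: "'s word set" and gen :: "'s \<Rightarrow> 'g"
    and nrm :: "complex mat \<Rightarrow> real"
    and k :: "nat \<Rightarrow> nat" and \<phi> :: "nat \<Rightarrow> 's \<Rightarrow> complex mat"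
    and \<sigma> :: "'g \<Rightarrow> 's word" and \<phi>t :: "nat \<Rightarrow> 'g \<Rightarrow> complex mat"
    and \<beta> :: "'g \<Rightarrow> nat \<Rightarrow> complex mat"
  assumes U: "nonprincipal_ultrafilter U"
    and pres: "is_presentation G S R gen" and finS: "finite S" and finR: "finite R"
    and norm: "ui_submult_norm nrm"
    and phi_unitary: "\<And>n s. s \<in> S \<Longrightarrow> unitary_mat (k n) (\<phi> n s)"
    and def_lim: "((\<lambda>n. defect nrm R (k n) (\<phi> n)) \<longlongrightarrow> 0) U"
    and sigma: "\<And>g. g \<in> carrier G \<Longrightarrow> \<sigma> g \<in> words S \<and> eval_word G gen (\<sigma> g) = g"
    and phit_unitary: "\<And>n g. g \<in> carrier G \<Longrightarrow> unitary_mat (k n) (\<phi>t n g)"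
    and phit_one: "\<And>n. \<phi>t n \<one>\<^bsub>G\<^esub> = 1\<^sub>m (k n)"
    and phit_inv: "\<And>n g. g \<in> carrier G \<Longrightarrow> \<phi>t n (inv\<^bsub>G\<^esub> g) = mat_adjoint (\<phi>t n g)"
    and phit_close: "\<And>g. g \<in> carrier G \<Longrightarrow> \<exists>C. eventually (\<lambda>n.
           nrm (mat_word (k n) (\<phi> n) (\<sigma> g) - \<phi>t n g) \<le> C * defect nrm R (k n) (\<phi> n)) U"
    and beta: "alpha_coboundary U G nrm R k \<phi> \<sigma> \<phi>t \<beta>"
  shows "eqU U nrm (\<beta> \<one>\<^bsub>G\<^esub>) (\<lambda>n. 0\<^sub>m (k n) (k n))
    \<and> (\<forall>g\<in>carrier G. eqU U nrm (\<beta> g)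
          (\<lambda>n. - (phiU k \<phi> \<sigma> g n * \<beta> (inv\<^bsub>G\<^esub> g) n * mat_adjoint (phiU k \<phi> \<sigma> g n))))
    \<and> (\<forall>g\<in>carrier G. \<forall>h\<in>carrier G. eqU U nrm (c_seq G nrm R k \<phi> \<phi>t g h)
          (\<lambda>n. phiU k \<phi> \<sigma> g n * \<beta> h n * phiU k \<phi> \<sigma> h n
               - \<beta> (g \<otimes>\<^bsub>G\<^esub> h) n * phiU k \<phi> \<sigma> (g \<otimes>\<^bsub>G\<^esub> h) n
               + \<beta> g n * phiU k \<phi> \<sigma> (g \<otimes>\<^bsub>G\<^esub> h) n))
    \<and> (\<exists>\<beta>'. alpha_coboundary U G nrm R k \<phi> \<sigma> \<phi>t \<beta>' \<and>
          (\<forall>g\<in>carrier G. eqU U nrm (\<lambda>n. mat_adjoint (\<beta>' g n)) (\<lambda>n. - \<beta>' g n)))"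
proof -
  have "group G"
    using pres unfolding is_presentation_def by blast
  interpret almost_rep nrm G U S R gen k \<phi> \<sigma> \<phi>t
    by (intro almost_rep.intro ui_norm.intro almost_rep_axioms.intro)
      (fact norm \<open>group G\<close> pres finR phi_unitary def_lim sigma phit_unitary phit_one phit_inv phit_close)+
  show ?thesis
    using coboundary_one[OF beta] coboundary_inv[OF beta] cseq_coboundary[OF beta]
      exists_skew_coboundary[OF beta] by blast
qed

end
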